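(* Let $X$ be a Riemannian manifold. Suppose that for every $i$ and every Lipschitz simplex $\sigma\in S_i^{\mathrm{Lip}}(X)$ a Lipschitz map $h_\sigma:\Delta^i\times[0,1]\to X$ is given. For $m\in\{0,1\}$ set $f^{(m)}(\sigma)=h_\sigma(\cdot,m)$, extended linearly. (a) Suppose that $h_{\partial_k\sigma}=h_\sigma\circ(\partial_k\times\mathrm{Id}_{[0,1]})$ for every Lipschitz simplex $\sigma$ and every face index $k$. Then the induced maps $f^{(0)}_*,f^{(1)}_*:C_*^{\mathrm{Lip}}(X)\to C_*^{\mathrm{Lip}}(X)$ are chain homotopic. (b) Suppose in addition that: - there are functions $b_i:\mathbb{R}_{\ge0}\to\mathbb{R}_{\ge0}$ with $\mathrm{Lip}(h_\sigma)\le b_i(\mathrm{Lip}(\sigma))$ for every $i$-simplex $\sigma$; and - for every locally finite family $\{\sigma_j\}_{j\in\mathbb{N}}$ of simplices in $X$, the family of sets $\{h_{\sigma_j}(\Delta^{*}\times[0,1])\}_{j}$ is locally finite in $X$. Then $f^{(m)}(\sum_j\lambda_j\sigma_j)=\sum_j\lambda_j f^{(m)}(\sigma_j)$, for $m=0,1$, defines maps $C_*^{\mathrm{lf},\mathrm{Lip}}(X)\to C_*^{\mathrm{lf},\mathrm{Lip}}(X)$ and $C_*^{\mathrm{lf},\mathrm{Lip},\ell^1}(X)\to C_*^{\mathrm{lf},\mathrm{Lip},\ell^1}(X)$. On each of these complexes, $f^{(0)}_*$ and $f^{(1)}_*$ are chain homotopic within that complex. (c) If moreover $h_\sigma$ is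 smooth whenever $\sigma$ is smooth, then the same conclusions hold for the corresponding subcomplexes of chains of smooth simplices.
   Context: All chains have real coefficients. $\Delta^i$ is the standard simplex, and $\Delta^i\times[0,1]$ carries its Euclidean metric. $\partial_k$ denotes both the $k$-th face operator and the affine inclusion $\Delta^{i-1}\to\Delta^i$ of the $k$-th face. $C_*^{\mathrm{Lip}}(X)$ is the complex of finite chains of Lipschitz simplices. A family of simplices is locally finite if every compact subset of $X$ meets the images of only finitely many of them. $C_*^{\mathrm{lf},\mathrm{Lip}}(X)$ is the complex of (possibly infinite) chains $\sum_j\lambda_j\sigma_j$ of pairwise distinct simplices with locally finite support and uniformly bounded Lipschitz constants. $C_*^{\mathrm{lf},\mathrm{Lip},\ell^1}(X)$ is its subcomplex of chains with finite $\ell^1$-norm $\sum_j|\lambda_j|$. A simplex is smooth if it extends to a $C^1$ map on a neighbourhood of $\Delta^i$ in its affine span. *)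

theory Defs
  imports "HOL-Homology.Homology" "HOL-Analysis.Analysis"
begin

text \<open>Simplices are the extensional maps on the standard simplex of HOL-Homology
  (points of \<Delta>^i are functions nat => real vanishing beyond i).
  The target space X is an arbitrary metric space (M,d) whose carrier lies in a
  Euclidean space (needed for smoothness in part (c)).\<close>

type_synonym 'a lsimp = "(nat \<Rightarrow> real) \<Rightarrow> 'a"
type_synonym 'a rchain = "'a lsimp \<Rightarrow> real"

definition sdist :: "nat \<Rightarrow> (nat \<Rightarrow> real) \<Rightarrow> (nat \<Rightarrow> real) \<Rightarrow> real" where
  "sdist i x y = sqrt (\<Sum>j\<le>i. (x j - y j)^2)"

definition pdist :: "nat \<Rightarrow> (nat \<Rightarrow> real) \<times> real \<Rightarrow> (nat \<Rightarrow> real) \<times> real \<Rightarrow> real" where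
  "pdist i p q = sqrt ((\<Sum>j\<le>i. (fst p j - fst q j)^2) + (snd p - snd q)^2)"

definition lip_simplex_L :: "'a set \<Rightarrow> ('a \<Rightarrow> 'a \<Rightarrow> real) \<Rightarrow> nat \<Rightarrow> 'a lsimp \<Rightarrow> real \<Rightarrow> bool" where
  "lip_simplex_L M d i \<sigma> L \<longleftrightarrow>
     \<sigma> \<in> extensional (standard_simplex i) \<and> \<sigma> ` standard_simplex i \<subseteq> M \<and>
     (\<forall>x\<in>standard_simplex i. \<forall>y\<in>standard_simplex i. d (\<sigma> x) (\<sigma> y) \<le> L * sdist i x y)"

definition lip_simplex :: "'a set \<Rightarrow> ('a \<Rightarrow> 'a \<Rightarrow> real) \<Rightarrow> nat \<Rightarrow> 'a lsimp \<Rightarrow> bool" where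
  "lip_simplex M d i \<sigma> \<longleftrightarrow> (\<exists>L. lip_simplex_L M d i \<sigma> L)"

definition lip_prism_L :: "'a set \<Rightarrow> ('a \<Rightarrow> 'a \<Rightarrow> real) \<Rightarrow> nat \<Rightarrow> ((nat \<Rightarrow> real) \<times> real \<Rightarrow> 'a) \<Rightarrow> real \<Rightarrow> bool" where
  "lip_prism_L M d i H L \<longleftrightarrow>
     H ` (standard_simplex i \<times> {0..1}) \<subseteq> M \<and>
     (\<forall>p\<in>standard_simplex i \<times> {0..1}. \<forall>q\<in>standard_simplex i \<times> {0..1}. d (H p) (H q) \<le> L * pdist i p q)"

text \<open>Smoothness: C^1 extension to a neighbourhood in the affine span, expressed by
  continuous directional derivatives along a basis of the span's direction space.\<close>
definition aff_simplex :: "nat \<Rightarrow> (nat \<Rightarrow> real) set" where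
  "aff_simplex i = {x. (\<forall>j>i. x j = 0) \<and> (\<Sum>j\<le>i. x j) = 1}"

definition sdir :: "nat \<Rightarrow> nat \<Rightarrow> real" where
  "sdir j = (\<lambda>l. if l = j then 1 else if l = 0 then -1 else 0)"

definition smooth_simplex :: "nat \<Rightarrow> ((nat \<Rightarrow> real) \<Rightarrow> 'a::real_normed_vector) \<Rightarrow> bool" where
  "smooth_simplex i \<sigma> \<longleftrightarrow>
    (\<exists>U F D. openin (subtopology (powertop_real UNIV) (aff_simplex i)) U \<and>
       standard_simplex i \<subseteq> U \<and> (\<forall>x\<in>standard_simplex i. F x = \<sigma> x) \<and>
       (\<forall>j\<in>{1..i}. \<forall>x\<in>U. ((\<lambda>t. F (\<lambda>l. x l + t * sdir j l)) has_vector_derivative D j x) (at 0)) \<and>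
       (\<forall>j\<in>{1..i}. continuous_map (subtopology (powertop_real UNIV) U) euclidean (D j)))"

definition smooth_prism :: "nat \<Rightarrow> ((nat \<Rightarrow> real) \<times> real \<Rightarrow> 'a::real_normed_vector) \<Rightarrow> bool" where
  "smooth_prism i H \<longleftrightarrow>
    (\<exists>U F D Dt. openin (prod_topology (subtopology (powertop_real UNIV) (aff_simplex i)) euclideanreal) U \<and>
       standard_simplex i \<times> {0..1} \<subseteq> U \<and> (\<forall>p\<in>standard_simplex i \<times> {0..1}. F p = H p) \<and>
       (\<forall>j\<in>{1..i}. \<forall>x s. (x, s) \<in> U \<longrightarrow>
          ((\<lambda>t. F (\<lambda>l. x l + t * sdir j l, s)) has_vector_derivative D j (x, s)) (at 0)) \<and>
       (\<forall>x s. (x, s) \<in> U \<longrightarrow> ((\<lambda>t. F (x, s + t)) has_vector_derivative Dt (x, s)) (at 0)) \<and>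
       (\<forall>j\<in>{1..i}. continuous_map (subtopology (prod_topology (powertop_real UNIV) euclideanreal) U) euclidean (D j)) \<and>
       continuous_map (subtopology (prod_topology (powertop_real UNIV) euclideanreal) U) euclidean Dt)"

definition csupp :: "'a rchain \<Rightarrow> 'a lsimp set" where
  "csupp c = {\<sigma>. c \<sigma> \<noteq> 0}"

datatype ckind = Kfin | Klf | Klfl1

text \<open>Membership in degree i of C^Lip (Kfin), C^{lf,Lip} (Klf), C^{lf,Lip,l1} (Klfl1),
  or (if sm) of the corresponding subcomplex of chains of smooth simplices.\<close>
definition lf_lip_chain :: "'a set \<Rightarrow> ('a \<Rightarrow> 'a \<Rightarrow> real) \<Rightarrow> nat \<Rightarrow> 'a rchain \<Rightarrow> bool" where
  "lf_lip_chain M d i c \<longleftrightarrow>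
     (\<exists>L. \<forall>\<sigma>\<in>csupp c. lip_simplex_L M d i \<sigma> L) \<and>
     (\<forall>K. compactin (Metric_space.mtopology M d) K \<longrightarrow>
          finite {\<sigma>\<in>csupp c. \<sigma> ` standard_simplex i \<inter> K \<noteq> {}})"

definition in_chains :: "'a::real_normed_vector set \<Rightarrow> ('a \<Rightarrow> 'a \<Rightarrow> real) \<Rightarrow> ckind \<Rightarrow> bool \<Rightarrow> nat \<Rightarrow> 'a rchain \<Rightarrow> bool" where
  "in_chains M d kind sm i c \<longleftrightarrow>
     (\<forall>\<sigma>\<in>csupp c. lip_simplex M d i \<sigma> \<and> (sm \<longrightarrow> smooth_simplex i \<sigma>)) \<and>
     (kind = Kfin \<longrightarrow> finite (csupp c)) \<and>
     (kind \<noteq> Kfin \<longrightarrow> lf_lip_chain M d i c) \<and>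
     (kind = Klfl1 \<longrightarrow> (\<lambda>\<sigma>. \<bar>c \<sigma>\<bar>) summable_on UNIV)"

definition bd :: "nat \<Rightarrow> 'a rchain \<Rightarrow> 'a rchain" where
  "bd i c = (\<lambda>\<tau>. \<Sum>k\<le>i. (-1)^k * (\<Sum>\<sigma>\<in>{\<sigma>. c \<sigma> \<noteq> 0 \<and> singular_face i k \<sigma> = \<tau>}. c \<sigma>))"

definition fmap :: "(nat \<Rightarrow> 'a lsimp \<Rightarrow> (nat \<Rightarrow> real) \<times> real \<Rightarrow> 'a) \<Rightarrow> real \<Rightarrow> nat \<Rightarrow> 'a lsimp \<Rightarrow> 'a lsimp" where
  "fmap h m i \<sigma> = restrict (\<lambda>x. h i \<sigma> (x, m)) (standard_simplex i)"

definition push :: "(nat \<Rightarrow> 'a lsimp \<Rightarrow> (nat \<Rightarrow> real) \<times> real \<Rightarrow> 'a) \<Rightarrow> real \<Rightarrow> nat \<Rightarrow> 'a rchain \<Rightarrow> 'a rchain" where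
  "push h m i c = (\<lambda>\<tau>. \<Sum>\<sigma>\<in>{\<sigma>. c \<sigma> \<noteq> 0 \<and> fmap h m i \<sigma> = \<tau>}. c \<sigma>)"

definition chain_homotopic_in ::
  "'a::real_normed_vector set \<Rightarrow> ('a \<Rightarrow> 'a \<Rightarrow> real) \<Rightarrow> ckind \<Rightarrow> bool \<Rightarrow>
   (nat \<Rightarrow> 'a rchain \<Rightarrow> 'a rchain) \<Rightarrow> (nat \<Rightarrow> 'a rchain \<Rightarrow> 'a rchain) \<Rightarrow> bool" where
  "chain_homotopic_in M d kind sm f g \<longleftrightarrow>
    (\<exists>H. (\<forall>i c. in_chains M d kind sm i c \<longrightarrow> in_chains M d kind sm (Suc i) (H i c)) \<and>
         (\<forall>i a b c c'. in_chains M d kind sm i c \<longrightarrow> in_chains M d kind sm i c' \<longrightarrow>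
              H i (\<lambda>\<sigma>. a * c \<sigma> + b * c' \<sigma>) = (\<lambda>\<sigma>. a * H i c \<sigma> + b * H i c' \<sigma>)) \<and>
         (\<forall>i c. in_chains M d kind sm i c \<longrightarrow>
              (\<lambda>\<sigma>. g i c \<sigma> - f i c \<sigma>) =
              (\<lambda>\<sigma>. bd (Suc i) (H i c) \<sigma> + (if i = 0 then 0 else H (i - 1) (bd i c) \<sigma>))))"

definition homotopy_conclusion ::
  "'a::real_normed_vector set \<Rightarrow> ('a \<Rightarrow> 'a \<Rightarrow> real) \<Rightarrow> (nat \<Rightarrow> 'a lsimp \<Rightarrow> (nat \<Rightarrow> real) \<times> real \<Rightarrow> 'a) \<Rightarrow>
   ckind \<Rightarrow> bool \<Rightarrow> bool" where
  "homotopy_conclusion M d h kind sm \<longleftrightarrow>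
    (\<forall>m\<in>{0,1}. \<forall>i c. in_chains M d kind sm i c \<longrightarrow> in_chains M d kind sm i (push h m i c)) \<and>
    chain_homotopic_in M d kind sm (push h 0) (push h 1)"

definition h_lipschitz where
  "h_lipschitz M d h \<longleftrightarrow> (\<forall>i \<sigma>. lip_simplex M d i \<sigma> \<longrightarrow> (\<exists>L. lip_prism_L M d i (h i \<sigma>) L))"

definition face_compatible where
  "face_compatible M d h \<longleftrightarrow>
    (\<forall>i \<sigma> k. 1 \<le> i \<longrightarrow> k \<le> i \<longrightarrow> lip_simplex M d i \<sigma> \<longrightarrow>
       (\<forall>x\<in>standard_simplex (i - 1). \<forall>t\<in>{0..1}.
          h (i - 1) (singular_face i k \<sigma>) (x, t) = h i \<sigma> (simplical_face k x, t)))"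

definition lip_bounded where
  "lip_bounded M d h \<longleftrightarrow>
    (\<exists>b :: nat \<Rightarrow> real \<Rightarrow> real. (\<forall>i L. 0 \<le> L \<longrightarrow> 0 \<le> b i L) \<and>
       (\<forall>i \<sigma> L. 0 \<le> L \<longrightarrow> lip_simplex_L M d i \<sigma> L \<longrightarrow> lip_prism_L M d i (h i \<sigma>) (b i L)))"

definition preserves_local_finiteness where
  "preserves_local_finiteness M d h \<longleftrightarrow>
    (\<forall>(dim :: nat \<Rightarrow> nat) s. (\<forall>j. lip_simplex M d (dim j) (s j)) \<longrightarrow>
       (\<forall>K. compactin (Metric_space.mtopology M d) K \<longrightarrow>
            finite {j. s j ` standard_simplex (dim j) \<inter> K \<noteq> {}}) \<longrightarrow>
       (\<forall>K. compactin (Metric_space.mtopology M d) K \<longrightarrow>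
            finite {j. h (dim j) (s j) ` (standard_simplex (dim j) \<times> {0..1}) \<inter> K \<noteq> {}}))"

definition preserves_smoothness where
  "preserves_smoothness M d h \<longleftrightarrow>
    (\<forall>i \<sigma>. lip_simplex M d i \<sigma> \<longrightarrow> smooth_simplex i \<sigma> \<longrightarrow> smooth_prism i (h i \<sigma>))"

end

theory Submission
  imports Defs
begin

text \<open>The chain homotopy is the prism operator. The prism \<open>\<Delta>\<^sup>i \<times> [0,1]\<close> is triangulated by the
  \<open>i + 1\<close> simplices spanned by \<open>(e\<^sub>0,0), \<dots>, (e\<^sub>k,0), (e\<^sub>k,1), \<dots>, (e\<^sub>i,1)\<close>, and their alternating
  sum \<open>P i\<close> satisfies \<open>\<partial>(P i) = top - bottom - \<Sum>\<^sub>k (-1)\<^sup>k (\<partial>\<^sub>k \<times> id)\<^sub>*(P (i - 1))\<close>. Pushing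
  \<open>P i\<close> forward along \<open>h\<^sub>\<sigma>\<close> gives \<open>H \<sigma>\<close>, and face compatibility \<open>h\<^bsub>\<partial>\<^sub>k\<sigma>\<^esub> = h\<^sub>\<sigma> \<circ> (\<partial>\<^sub>k \<times> id)\<close>
  turns the identity into \<open>\<partial>H + H\<partial> = f\<^sub>1 - f\<^sub>0\<close> on each simplex. Infinite chains are handled
  termwise: the coefficient of a simplex \<open>\<tau>\<close> only involves the \<open>\<sigma>\<close> whose prism image contains the image
  of \<open>\<tau>\<close>, finitely many by local finiteness of the prisms. The prism simplices are affine with
  Lipschitz constant at most \<open>(i + 2)\<^sup>2\<close>, so the bounds \<open>b\<^sub>i\<close> keep the constants uniform; \<open>H \<sigma>\<close> has
  \<open>i + 1\<close> simplices, which preserves the \<open>l\<^sup>1\<close>-norm bound; and smoothness survives the affine reparametrisation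
  because two partial derivatives, one of them continuous, add up along the diagonal direction.\<close>

section \<open>The simplicial prism\<close>

text \<open>A point \<open>(x, t)\<close> of \<open>\<Delta>\<^sup>q \<times> [0,1]\<close> is encoded as the sequence with \<open>t\<close> in position \<open>0\<close> followed by
  the coordinates of \<open>x\<close>. So \<open>lift_vertex t m\<close> is the point \<open>(e\<^sub>m, t)\<close>, and \<open>prism_simplex q i\<close> has the
  vertices \<open>(e\<^sub>0,0), \<dots>, (e\<^sub>i,0), (e\<^sub>i,1), \<dots>, (e\<^sub>q,1)\<close>.\<close>

definition lift_vertex :: "real \<Rightarrow> nat \<Rightarrow> nat \<Rightarrow> real" where
  "lift_vertex t m = (\<lambda>l. if l = 0 then t else if l = Suc m then 1 else 0)"

definition prism_vertex :: "nat \<Rightarrow> nat \<Rightarrow> nat \<Rightarrow> real" where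
  "prism_vertex i j = (if j \<le> i then lift_vertex 0 j else lift_vertex 1 (j - 1))"

definition prism_simplex :: "nat \<Rightarrow> nat \<Rightarrow> (nat \<Rightarrow> real) \<Rightarrow> nat \<Rightarrow> real" where
  "prism_simplex q i = oriented_simplex (Suc q) (prism_vertex i)"

definition simplicial_prism :: "nat \<Rightarrow> (nat \<Rightarrow> real) chain" where
  "simplicial_prism q = (\<Sum>i\<le>q. frag_cmul ((-1) ^ i) (frag_of (prism_simplex q i)))"

lemma simplical_face_lift_vertex:
  "simplical_face (Suc k) (lift_vertex t m) = lift_vertex t (if m < k then m else Suc m)"
  by (auto simp: fun_eq_iff simplical_face_def lift_vertex_def)

lemma simplex_map_simplical_face_oriented_simplex:
  "simplex_map p (simplical_face k) (oriented_simplex p l) = oriented_simplex p (\<lambda>j. simplical_face k (l j))"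
  by (auto simp: fun_eq_iff simplex_map_def oriented_simplex_def simplical_face_def)

lemma singular_face_prism_simplex_top:
  "singular_face (Suc q) 0 (prism_simplex q 0) = oriented_simplex q (lift_vertex 1)"
  by (simp add: prism_simplex_def singular_face_oriented_simplex oriented_simplex_eq prism_vertex_def)

lemma singular_face_prism_simplex_bottom:
  "singular_face (Suc q) (Suc q) (prism_simplex q q) = oriented_simplex q (lift_vertex 0)"
  by (simp add: prism_simplex_def singular_face_oriented_simplex oriented_simplex_eq prism_vertex_def)

lemma singular_face_prism_simplex_Suc:
  assumes "i < q"
  shows "singular_face (Suc q) (Suc i) (prism_simplex q (Suc i)) = singular_face (Suc q) (Suc i) (prism_simplex q i)"
  using assms by (simp add: prism_simplex_def singular_face_oriented_simplex oriented_simplex_eq prism_vertex_def)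

lemma singular_face_prism_simplex_below:
  assumes "k \<le> i" "i < q"
  shows "singular_face (Suc q) k (prism_simplex q (Suc i)) =
           simplex_map q (simplical_face (Suc k)) (prism_simplex (q - 1) i)"
  using assms
  by (auto simp: prism_simplex_def singular_face_oriented_simplex oriented_simplex_eq prism_vertex_def
      simplex_map_simplical_face_oriented_simplex simplical_face_lift_vertex)

lemma singular_face_prism_simplex_above:
  assumes "i < k" "k \<le> q"
  shows "singular_face (Suc q) (Suc k) (prism_simplex q i) =
           simplex_map q (simplical_face (Suc k)) (prism_simplex (q - 1) i)"
  using assms
  by (auto simp: prism_simplex_def singular_face_oriented_simplex oriented_simplex_eq prism_vertex_def
      simplex_map_simplical_face_oriented_simplex simplical_face_lift_vertex)

lemma sum_prism_faces_diagonal: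
  "(\<Sum>i\<le>q. frag_of (singular_face (Suc q) i (prism_simplex q i))
             - frag_of (singular_face (Suc q) (Suc i) (prism_simplex q i))) =
     frag_of (oriented_simplex q (lift_vertex 1)) - frag_of (oriented_simplex q (lift_vertex 0))"
proof -
  define G where "G j = frag_of (singular_face (Suc q) j (prism_simplex q (min j q)))" for j
  have "frag_of (singular_face (Suc q) (Suc i) (prism_simplex q i)) = G (Suc i)" if "i \<le> q" for i
    using that by (cases "i = q") (simp_all add: G_def singular_face_prism_simplex_Suc)
  then have "(\<Sum>i\<le>q. frag_of (singular_face (Suc q) i (prism_simplex q i))
                 - frag_of (singular_face (Suc q) (Suc i) (prism_simplex q i))) = (\<Sum>i\<le>q. G i - G (Suc i))"
    by (intro sum.cong) (simp_all add: G_def)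
  also have "\<dots> = G 0 - G (Suc q)"
    by (rule sum_telescope)
  finally show ?thesis
    by (simp add: G_def singular_face_prism_simplex_top singular_face_prism_simplex_bottom)
qed

text \<open>Face \<open>j < i\<close> of the \<open>i\<close>-th prism simplex is the \<open>(i - 1)\<close>-th prism simplex one dimension
  down pushed forward along the \<open>j\<close>-th face map, face \<open>j > i + 1\<close> is the \<open>i\<close>-th one pushed forward
  along the \<open>(j - 1)\<close>-th face map; \<open>\<psi>\<close> records this correspondence of index pairs.\<close>

lemma sum_prism_faces_off_diagonal:
  assumes "0 < q"
  shows "(\<Sum>(i, j)\<in>{(i, j). i \<le> q \<and> j \<le> Suc q \<and> j \<noteq> i \<and> j \<noteq> Suc i}.
            frag_cmul ((-1) ^ (i + j)) (frag_of (singular_face (Suc q) j (prism_simplex q i)))) =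
         - (\<Sum>k\<le>q. frag_cmul ((-1) ^ k) (chain_map q (simplical_face (Suc k)) (simplicial_prism (q - 1))))"
proof -
  define A where "A = {(i, j). i \<le> q \<and> j \<le> Suc q \<and> j \<noteq> i \<and> j \<noteq> Suc i}"
  define B where "B = {..q} \<times> {..q - 1}"
  define \<phi> :: "nat \<times> nat \<Rightarrow> nat \<times> nat" where "\<phi> = (\<lambda>(k, i). if k \<le> i then (Suc i, k) else (i, Suc k))"
  define \<psi> :: "nat \<times> nat \<Rightarrow> nat \<times> nat" where "\<psi> = (\<lambda>(i, j). if j < i then (j, i - 1) else (j - 1, i))"
  define G where "G k i = frag_of (simplex_map q (simplical_face (Suc k)) (prism_simplex (q - 1) i))" for k i
  have "(\<Sum>(i, j)\<in>A. frag_cmul ((-1) ^ (i + j)) (frag_of (singular_face (Suc q) j (prism_simplex q i)))) =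
          (\<Sum>(k, i)\<in>B. - frag_cmul ((-1) ^ (k + i)) (G k i))"
  proof (rule sum.reindex_bij_witness[where i = \<phi> and j = \<psi>])
    fix a assume "a \<in> A"
    with assms show "\<phi> (\<psi> a) = a" "\<psi> a \<in> B"
      by (auto simp: A_def B_def \<phi>_def \<psi>_def split: if_splits)
  next
    fix b assume "b \<in> B"
    with assms show "\<psi> (\<phi> b) = b" "\<phi> b \<in> A"
      by (auto simp: A_def B_def \<phi>_def \<psi>_def split: if_splits)
  next
    fix a assume "a \<in> A"
    then obtain i j where a: "a = (i, j)" "i \<le> q" "j \<le> Suc q" "j \<noteq> i" "j \<noteq> Suc i"
      by (auto simp: A_def)
    show "(case \<psi> a of (k, i) \<Rightarrow> - frag_cmul ((-1) ^ (k + i)) (G k i)) =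
          (case a of (i, j) \<Rightarrow> frag_cmul ((-1) ^ (i + j)) (frag_of (singular_face (Suc q) j (prism_simplex q i))))"
    proof (cases "j < i")
      case True
      then obtain i' where "i = Suc i'"
        using less_imp_Suc_add by blast
      with a True show ?thesis
        by (simp add: \<psi>_def G_def singular_face_prism_simplex_below add.commute)
    next
      case False
      then obtain j' where "j = Suc j'"
        using a by (metis not0_implies_Suc less_Suc_eq_0_disj)
      with a False show ?thesis
        by (simp add: \<psi>_def G_def singular_face_prism_simplex_above add.commute)
    qed
  qed
  also have "\<dots> = - (\<Sum>k\<le>q. \<Sum>i\<le>q - 1. frag_cmul ((-1) ^ (k + i)) (G k i))"
    by (simp add: B_def sum_negf del: minus_frag_cmul flip: sum.cartesian_product)
  also have "\<dots> = - (\<Sum>k\<le>q. frag_cmul ((-1) ^ k) (chain_map q (simplical_face (Suc k)) (simplicial_prism (q - 1))))"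
    by (simp add: G_def simplicial_prism_def chain_map_sum frag_cmul_sum power_add o_def)
  finally show ?thesis
    by (simp add: A_def)
qed

lemma chain_boundary_simplicial_prism:
  "chain_boundary (Suc q) (simplicial_prism q) =
     frag_of (oriented_simplex q (lift_vertex 1)) - frag_of (oriented_simplex q (lift_vertex 0))
     - (if q = 0 then 0 else
         (\<Sum>k\<le>q. frag_cmul ((-1) ^ k) (chain_map q (simplical_face (Suc k)) (simplicial_prism (q - 1)))))"
proof -
  define F where "F i j = frag_of (singular_face (Suc q) j (prism_simplex q i))" for i j
  define A where "A = {(i, j). i \<le> q \<and> j \<le> Suc q \<and> j \<noteq> i \<and> j \<noteq> Suc i}"
  have "(\<Sum>j\<le>Suc q. frag_cmul ((-1) ^ (i + j)) (F i j)) =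
          F i i - F i (Suc i) + (\<Sum>j\<in>{..Suc q} - {i, Suc i}. frag_cmul ((-1) ^ (i + j)) (F i j))"
    if "i \<le> q" for i
  proof -
    have "(\<Sum>j\<le>Suc q. frag_cmul ((-1) ^ (i + j)) (F i j)) = frag_cmul ((-1) ^ (i + i)) (F i i) +
       (frag_cmul ((-1) ^ (i + Suc i)) (F i (Suc i)) + (\<Sum>j\<in>{..Suc q} - {i} - {Suc i}. frag_cmul ((-1) ^ (i + j)) (F i j)))"
      using that by (simp add: sum.remove[of "{..Suc q}" i] sum.remove[of "{..Suc q} - {i}" "Suc i"] del: sum.atMost_Suc)
    then show ?thesis
      by (simp add: Diff_insert2[symmetric])
  qed
  moreover have "A = Sigma {..q} (\<lambda>i. {..Suc q} - {i, Suc i})"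
    by (auto simp: A_def)
  ultimately have "chain_boundary (Suc q) (simplicial_prism q) =
      (\<Sum>i\<le>q. F i i - F i (Suc i)) + (\<Sum>(i, j)\<in>A. frag_cmul ((-1) ^ (i + j)) (F i j))"
    by (simp add: simplicial_prism_def chain_boundary_sum chain_boundary_cmul chain_boundary_of
        frag_cmul_sum F_def power_add sum.distrib sum.Sigma del: sum.atMost_Suc)
  moreover have "(\<Sum>(i, j)\<in>A. frag_cmul ((-1) ^ (i + j)) (F i j)) = - (if q = 0 then 0 else
         (\<Sum>k\<le>q. frag_cmul ((-1) ^ k) (chain_map q (simplical_face (Suc k)) (simplicial_prism (q - 1)))))"
  proof (cases "q = 0")
    case True
    then have "A = {}"
      by (auto simp: A_def)
    then show ?thesis
      by (simp add: True)
  next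
    case False
    then show ?thesis
      using sum_prism_faces_off_diagonal[of q] by (simp add: A_def F_def)
  qed
  ultimately show ?thesis
    by (simp add: F_def sum_prism_faces_diagonal)
qed

lemma oriented_simplex_lift_vertices:
  assumes tm: "\<And>j. j \<le> p \<Longrightarrow> t j \<in> {0..1} \<and> m j \<le> q" and x: "x \<in> standard_simplex p"
  shows "oriented_simplex p (\<lambda>j. lift_vertex (t j) (m j)) x \<circ> Suc \<in> standard_simplex q"
    and "oriented_simplex p (\<lambda>j. lift_vertex (t j) (m j)) x 0 \<in> {0..1}"
proof -
  let ?z = "oriented_simplex p (\<lambda>j. lift_vertex (t j) (m j)) x"
  have x01: "\<And>j. 0 \<le> x j \<and> x j \<le> 1" and sum1: "(\<Sum>j\<le>p. x j) = 1"
    using x by (auto simp: standard_simplex_def)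
  have coord: "?z (Suc n) = (\<Sum>j\<le>p. if n = m j then x j else 0)" for n
    using x by (simp add: oriented_simplex_def lift_vertex_def if_distrib[of "\<lambda>u. u * _"] cong: if_cong)
  show "?z \<circ> Suc \<in> standard_simplex q"
    unfolding standard_simplex_def
  proof (intro CollectI conjI allI impI)
    fix n
    show "0 \<le> (?z \<circ> Suc) n"
      by (simp add: coord sum_nonneg x01)
    show "(?z \<circ> Suc) n \<le> 1"
      unfolding o_def coord sum1[symmetric] by (rule sum_mono) (simp add: x01)
    assume "q < n"
    then show "(?z \<circ> Suc) n = 0"
      using tm by (force simp: coord intro!: sum.neutral)
  next
    have "(\<Sum>n\<le>q. \<Sum>j\<le>p. if n = m j then x j else 0) = (\<Sum>j\<le>p. x j)"
      using tm by (subst sum.swap) (simp add: sum.delta)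
    then show "(\<Sum>n\<le>q. (?z \<circ> Suc) n) = 1"
      by (simp add: coord sum1)
  qed
  have "(\<Sum>j\<le>p. t j * x j) \<le> (\<Sum>j\<le>p. x j)"
    by (rule sum_mono) (use tm x01 in \<open>auto intro: mult_left_le_one_le\<close>)
  then show "?z 0 \<in> {0..1}"
    using x tm x01 by (auto simp: oriented_simplex_def lift_vertex_def sum1 mult.commute intro: sum_nonneg)
qed

lemma oriented_simplex_lift_vertex:
  assumes "x \<in> standard_simplex q"
  shows "oriented_simplex q (lift_vertex t) x \<circ> Suc = x" and "oriented_simplex q (lift_vertex t) x 0 = t"
  using assms
  by (auto simp: fun_eq_iff oriented_simplex_def lift_vertex_def standard_simplex_def if_distrib[of "\<lambda>u. u * _"]
      sum_distrib_left[symmetric] cong: if_cong)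

lemma prism_simplex_in_prism:
  assumes "i \<le> q" "x \<in> standard_simplex (Suc q)"
  shows "(prism_simplex q i x \<circ> Suc, prism_simplex q i x 0) \<in> standard_simplex q \<times> {0..1}"
proof -
  define t :: "nat \<Rightarrow> real" where "t j = (if j \<le> i then 0 else 1)" for j
  define m where "m j = (if j \<le> i then j else j - 1)" for j
  have "prism_vertex i = (\<lambda>j. lift_vertex (t j) (m j))"
    by (auto simp: fun_eq_iff prism_vertex_def t_def m_def)
  moreover have "\<And>j. j \<le> Suc q \<Longrightarrow> t j \<in> {0..1} \<and> m j \<le> q"
    using assms(1) by (auto simp: t_def m_def)
  note oriented_simplex_lift_vertices[of "Suc q" t m q x, OF this assms(2)]
  ultimately show ?thesis
    by (simp add: prism_simplex_def)
qed

definition prism_piece :: "nat \<Rightarrow> ((nat \<Rightarrow> real) \<times> real \<Rightarrow> 'a) \<Rightarrow> nat \<Rightarrow> (nat \<Rightarrow> real) \<Rightarrow> 'a" where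
  "prism_piece q H i = simplex_map (Suc q) (\<lambda>z. H (z \<circ> Suc, z 0)) (prism_simplex q i)"

definition prism_chain :: "nat \<Rightarrow> ((nat \<Rightarrow> real) \<times> real \<Rightarrow> 'a) \<Rightarrow> 'a chain" where
  "prism_chain q H = (\<Sum>i\<le>q. frag_cmul ((-1) ^ i) (frag_of (prism_piece q H i)))"

lemma prism_piece_image:
  assumes "i \<le> q"
  shows "prism_piece q H i ` standard_simplex (Suc q) \<subseteq> H ` (standard_simplex q \<times> {0..1})"
  using prism_simplex_in_prism[OF assms] by (auto simp: prism_piece_def simplex_map_def)

lemma keys_prism_chain:
  assumes "\<tau> \<in> Poly_Mapping.keys (prism_chain q H)"
  obtains i where "i \<le> q" "\<tau> = prism_piece q H i"
proof -
  have "\<tau> \<in> (\<Union>i\<le>q. Poly_Mapping.keys (frag_cmul ((-1) ^ i) (frag_of (prism_piece q H i))))"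
    using keys_sum[of "\<lambda>i. frag_cmul ((-1) ^ i) (frag_of (prism_piece q H i))" "{..q}"] assms
    unfolding prism_chain_def by (rule subsetD)
  then show ?thesis
    using that by (auto simp: keys_frag_of dest: subsetD[OF keys_cmul])
qed

lemma keys_prism_chain_image:
  assumes "\<tau> \<in> Poly_Mapping.keys (prism_chain q H)"
  shows "\<tau> ` standard_simplex (Suc q) \<subseteq> H ` (standard_simplex q \<times> {0..1})"
proof -
  obtain i where "i \<le> q" "\<tau> = prism_piece q H i"
    using assms by (elim keys_prism_chain)
  then show ?thesis
    using prism_piece_image by simp
qed

lemma prism_piece_cong:
  assumes "\<And>p. p \<in> standard_simplex q \<times> {0..1} \<Longrightarrow> H p = H' p" "i \<le> q"
  shows "prism_piece q H i = prism_piece q H' i"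
  using assms prism_simplex_in_prism by (auto simp: prism_piece_def simplex_map_def)

lemma prism_chain_cong:
  assumes "\<And>p. p \<in> standard_simplex q \<times> {0..1} \<Longrightarrow> H p = H' p"
  shows "prism_chain q H = prism_chain q H'"
  unfolding prism_chain_def using prism_piece_cong[OF assms] by simp

lemma simplical_face_Suc_shift:
  "simplical_face (Suc k) z \<circ> Suc = simplical_face k (z \<circ> Suc)" "simplical_face (Suc k) z 0 = z 0"
  by (auto simp: fun_eq_iff simplical_face_def)

lemma chain_boundary_prism_chain:
  "chain_boundary (Suc q) (prism_chain q H) =
     frag_of (restrict (\<lambda>x. H (x, 1)) (standard_simplex q)) - frag_of (restrict (\<lambda>x. H (x, 0)) (standard_simplex q))
     - (if q = 0 then 0 else
         (\<Sum>k\<le>q. frag_cmul ((-1) ^ k) (prism_chain (q - 1) (\<lambda>(x, t). H (simplical_face k x, t)))))"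
proof -
  let ?H = "\<lambda>z. H (z \<circ> Suc, z 0)"
  have eq: "prism_chain p G = chain_map (Suc p) (\<lambda>z. G (z \<circ> Suc, z 0)) (simplicial_prism p)" for p G
    by (simp add: prism_chain_def simplicial_prism_def prism_piece_def chain_map_sum o_def)
  have "simplicial_chain (Suc q) UNIV (simplicial_prism q)"
    by (simp add: simplicial_prism_def prism_simplex_def simplicial_chain_sum simplicial_chain_cmul
        simplicial_simplex_oriented_simplex)
  then have "chain_boundary (Suc q) (prism_chain q H) = chain_map q ?H (chain_boundary (Suc q) (simplicial_prism q))"
    by (simp add: eq chain_boundary_chain_map[OF simplicial_imp_singular_chain])
  moreover have "simplex_map q ?H (oriented_simplex q (lift_vertex t)) = restrict (\<lambda>x. H (x, t)) (standard_simplex q)" for t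
    by (simp add: simplex_map_def oriented_simplex_lift_vertex cong: restrict_cong)
  moreover have "chain_map q ?H (chain_map q (simplical_face (Suc k)) (simplicial_prism (q - 1))) =
                   prism_chain (q - 1) (\<lambda>(x, t). H (simplical_face k x, t))" if "q \<noteq> 0" for k
    using that by (simp add: eq simplical_face_Suc_shift flip: chain_map_compose[THEN fun_cong, unfolded o_def])
  ultimately show ?thesis
    by (simp add: chain_boundary_simplicial_prism chain_map_diff chain_map_sum o_def)
qed

lemma chain_boundary_prism_chain_compatible:
  assumes "\<And>k x t. 0 < q \<Longrightarrow> k \<le> q \<Longrightarrow> x \<in> standard_simplex (q - 1) \<Longrightarrow> t \<in> {0..1} \<Longrightarrow>
             G (singular_face q k \<sigma>) (x, t) = H (simplical_face k x, t)"
  shows "chain_boundary (Suc q) (prism_chain q H) =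
     frag_of (restrict (\<lambda>x. H (x, 1)) (standard_simplex q)) - frag_of (restrict (\<lambda>x. H (x, 0)) (standard_simplex q))
     - frag_extend (\<lambda>\<tau>. prism_chain (q - 1) (G \<tau>)) (chain_boundary q (frag_of \<sigma>))"
proof -
  have "prism_chain (q - 1) (G (singular_face q k \<sigma>)) = prism_chain (q - 1) (\<lambda>(x, t). H (simplical_face k x, t))"
    if "0 < q" "k \<le> q" for k
    by (rule prism_chain_cong) (use assms that in auto)
  then show ?thesis
    by (simp add: chain_boundary_prism_chain chain_boundary_of frag_extend_sum frag_extend_cmul)
qed

section \<open>Linear extension to chains with real coefficients\<close>

text \<open>If infinitely many \<open>\<sigma>\<close> contribute to \<open>\<tau>\<close>, the set sum below is \<open>0\<close> by convention; all lemmas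
  about \<open>coeff_extend\<close> assume that the contributing \<open>\<sigma>\<close> lie in a finite set.\<close>

definition coeff_extend :: "('s \<Rightarrow> 't \<Rightarrow>\<^sub>0 int) \<Rightarrow> ('s \<Rightarrow> real) \<Rightarrow> 't \<Rightarrow> real" where
  "coeff_extend \<Phi> c \<tau> =
     (\<Sum>\<sigma>\<in>{\<sigma>. c \<sigma> \<noteq> 0 \<and> Poly_Mapping.lookup (\<Phi> \<sigma>) \<tau> \<noteq> 0}. c \<sigma> * of_int (Poly_Mapping.lookup (\<Phi> \<sigma>) \<tau>))"

lemma coeff_extend_eq_sum:
  assumes "finite S" "\<And>\<sigma>. c \<sigma> \<noteq> 0 \<Longrightarrow> \<tau> \<in> Poly_Mapping.keys (\<Phi> \<sigma>) \<Longrightarrow> \<sigma> \<in> S"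
  shows "coeff_extend \<Phi> c \<tau> = (\<Sum>\<sigma>\<in>S. c \<sigma> * of_int (Poly_Mapping.lookup (\<Phi> \<sigma>) \<tau>))"
  unfolding coeff_extend_def
  by (rule sum.mono_neutral_left) (use assms in \<open>auto simp: in_keys_iff\<close>)

lemma coeff_extend_cong:
  assumes "\<And>\<sigma>. c \<sigma> \<noteq> 0 \<Longrightarrow> \<Phi> \<sigma> = \<Psi> \<sigma>"
  shows "coeff_extend \<Phi> c = coeff_extend \<Psi> c"
  unfolding coeff_extend_def fun_eq_iff using assms by (intro allI sum.cong) auto

lemma coeff_extend_zero [simp]: "coeff_extend (\<lambda>\<sigma>. 0) c = (\<lambda>\<tau>. 0)"
  by (simp add: coeff_extend_def fun_eq_iff)

lemma coeff_extend_nonzero: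
  assumes "coeff_extend \<Phi> c \<tau> \<noteq> 0"
  obtains \<sigma> where "c \<sigma> \<noteq> 0" "\<tau> \<in> Poly_Mapping.keys (\<Phi> \<sigma>)"
proof -
  have "{\<sigma>. c \<sigma> \<noteq> 0 \<and> Poly_Mapping.lookup (\<Phi> \<sigma>) \<tau> \<noteq> 0} \<noteq> {}"
  proof
    assume "{\<sigma>. c \<sigma> \<noteq> 0 \<and> Poly_Mapping.lookup (\<Phi> \<sigma>) \<tau> \<noteq> 0} = {}"
    with assms show False
      by (simp add: coeff_extend_def)
  qed
  then show ?thesis
    using that by (auto simp: in_keys_iff)
qed

lemma csupp_coeff_extend: "csupp (coeff_extend \<Phi> c) \<subseteq> (\<Union>\<sigma>\<in>csupp c. Poly_Mapping.keys (\<Phi> \<sigma>))"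
proof
  fix \<tau> assume "\<tau> \<in> csupp (coeff_extend \<Phi> c)"
  then obtain \<sigma> where "c \<sigma> \<noteq> 0" "\<tau> \<in> Poly_Mapping.keys (\<Phi> \<sigma>)"
    unfolding csupp_def by (auto elim: coeff_extend_nonzero)
  then show "\<tau> \<in> (\<Union>\<sigma>\<in>csupp c. Poly_Mapping.keys (\<Phi> \<sigma>))"
    by (auto simp: csupp_def)
qed

lemma coeff_extend_linear:
  assumes "finite S" "\<And>\<sigma>. c \<sigma> \<noteq> 0 \<or> c' \<sigma> \<noteq> 0 \<Longrightarrow> \<tau> \<in> Poly_Mapping.keys (\<Phi> \<sigma>) \<Longrightarrow> \<sigma> \<in> S"
  shows "coeff_extend \<Phi> (\<lambda>\<sigma>. a * c \<sigma> + b * c' \<sigma>) \<tau> = a * coeff_extend \<Phi> c \<tau> + b * coeff_extend \<Phi> c' \<tau>"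
proof -
  have "\<And>\<sigma>. a * c \<sigma> + b * c' \<sigma> \<noteq> 0 \<Longrightarrow> \<tau> \<in> Poly_Mapping.keys (\<Phi> \<sigma>) \<Longrightarrow> \<sigma> \<in> S"
    using assms(2) by (metis add.right_neutral mult_zero_right)
  then show ?thesis
    using assms by (simp add: coeff_extend_eq_sum[OF assms(1)] sum_distrib_left sum.distrib algebra_simps)
qed

lemma coeff_extend_add:
  assumes "finite S"
    "\<And>\<sigma>. c \<sigma> \<noteq> 0 \<Longrightarrow> \<tau> \<in> Poly_Mapping.keys (\<Phi> \<sigma>) \<union> Poly_Mapping.keys (\<Psi> \<sigma>) \<Longrightarrow> \<sigma> \<in> S"
  shows "coeff_extend (\<lambda>\<sigma>. \<Phi> \<sigma> + \<Psi> \<sigma>) c \<tau> = coeff_extend \<Phi> c \<tau> + coeff_extend \<Psi> c \<tau>"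
  using assms
  by (subst (1 2 3) coeff_extend_eq_sum[OF assms(1)])
     (auto simp: lookup_add sum.distrib algebra_simps in_keys_iff)

lemma lookup_frag_extend:
  assumes "finite R" "Poly_Mapping.keys x \<subseteq> R"
  shows "Poly_Mapping.lookup (frag_extend \<Phi> x) \<tau> =
           (\<Sum>\<rho>\<in>R. Poly_Mapping.lookup x \<rho> * Poly_Mapping.lookup (\<Phi> \<rho>) \<tau>)"
  unfolding frag_extend_def lookup_sum lookup_frag_cmul
  by (rule sum.mono_neutral_left) (use assms in \<open>auto simp: in_keys_iff\<close>)

lemma coeff_extend_frag_extend:
  assumes "finite S"
    "\<And>\<sigma> \<rho>. c \<sigma> \<noteq> 0 \<Longrightarrow> \<rho> \<in> Poly_Mapping.keys (\<Psi> \<sigma>) \<Longrightarrow> \<tau> \<in> Poly_Mapping.keys (\<Phi> \<rho>) \<Longrightarrow> \<sigma> \<in> S"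
  shows "coeff_extend \<Phi> (coeff_extend \<Psi> c) \<tau> = coeff_extend (\<lambda>\<sigma>. frag_extend \<Phi> (\<Psi> \<sigma>)) c \<tau>"
proof -
  define R where "R = (\<Union>\<sigma>\<in>S. Poly_Mapping.keys (\<Psi> \<sigma>))"
  have "finite R"
    using assms(1) by (simp add: R_def)
  have "coeff_extend \<Phi> (coeff_extend \<Psi> c) \<tau> =
          (\<Sum>\<rho>\<in>R. coeff_extend \<Psi> c \<rho> * of_int (Poly_Mapping.lookup (\<Phi> \<rho>) \<tau>))"
  proof (rule coeff_extend_eq_sum[OF \<open>finite R\<close>])
    fix \<rho> assume "coeff_extend \<Psi> c \<rho> \<noteq> 0" "\<tau> \<in> Poly_Mapping.keys (\<Phi> \<rho>)"
    then obtain \<sigma> where \<sigma>: "c \<sigma> \<noteq> 0" "\<rho> \<in> Poly_Mapping.keys (\<Psi> \<sigma>)"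
      by (elim coeff_extend_nonzero)
    then have "\<sigma> \<in> S"
      using assms(2) \<open>\<tau> \<in> Poly_Mapping.keys (\<Phi> \<rho>)\<close> by blast
    with \<sigma>(2) show "\<rho> \<in> R"
      unfolding R_def by blast
  qed
  also have "\<dots> = (\<Sum>\<rho>\<in>R. \<Sum>\<sigma>\<in>S. c \<sigma> * of_int (Poly_Mapping.lookup (\<Psi> \<sigma>) \<rho>) * of_int (Poly_Mapping.lookup (\<Phi> \<rho>) \<tau>))"
  proof (rule sum.cong[OF refl])
    fix \<rho> assume "\<rho> \<in> R"
    show "coeff_extend \<Psi> c \<rho> * of_int (Poly_Mapping.lookup (\<Phi> \<rho>) \<tau>) =
            (\<Sum>\<sigma>\<in>S. c \<sigma> * of_int (Poly_Mapping.lookup (\<Psi> \<sigma>) \<rho>) * of_int (Poly_Mapping.lookup (\<Phi> \<rho>) \<tau>))"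
    proof (cases "\<tau> \<in> Poly_Mapping.keys (\<Phi> \<rho>)")
      case True
      have "coeff_extend \<Psi> c \<rho> = (\<Sum>\<sigma>\<in>S. c \<sigma> * of_int (Poly_Mapping.lookup (\<Psi> \<sigma>) \<rho>))"
        by (rule coeff_extend_eq_sum[OF assms(1)]) (rule assms(2)[OF _ _ True])
      then show ?thesis
        by (simp add: sum_distrib_right)
    qed (simp add: in_keys_iff)
  qed
  also have "\<dots> = (\<Sum>\<sigma>\<in>S. \<Sum>\<rho>\<in>R. c \<sigma> * of_int (Poly_Mapping.lookup (\<Psi> \<sigma>) \<rho>) * of_int (Poly_Mapping.lookup (\<Phi> \<rho>) \<tau>))"
    by (rule sum.swap)
  also have "\<dots> = (\<Sum>\<sigma>\<in>S. c \<sigma> * (\<Sum>\<rho>\<in>R. of_int (Poly_Mapping.lookup (\<Psi> \<sigma>) \<rho>) * of_int (Poly_Mapping.lookup (\<Phi> \<rho>) \<tau>)))"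
    by (simp only: sum_distrib_left mult.assoc)
  also have "\<dots> = (\<Sum>\<sigma>\<in>S. c \<sigma> * of_int (Poly_Mapping.lookup (frag_extend \<Phi> (\<Psi> \<sigma>)) \<tau>))"
  proof (intro sum.cong refl)
    fix \<sigma> assume "\<sigma> \<in> S"
    then have keys: "Poly_Mapping.keys (\<Psi> \<sigma>) \<subseteq> R"
      by (auto simp: R_def)
    show "c \<sigma> * (\<Sum>\<rho>\<in>R. of_int (Poly_Mapping.lookup (\<Psi> \<sigma>) \<rho>) * of_int (Poly_Mapping.lookup (\<Phi> \<rho>) \<tau>)) =
               c \<sigma> * of_int (Poly_Mapping.lookup (frag_extend \<Phi> (\<Psi> \<sigma>)) \<tau>)"
      by (simp only: lookup_frag_extend[OF \<open>finite R\<close> keys] of_int_sum of_int_mult)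
  qed
  also have "\<dots> = coeff_extend (\<lambda>\<sigma>. frag_extend \<Phi> (\<Psi> \<sigma>)) c \<tau>"
  proof (rule coeff_extend_eq_sum[where \<Phi> = "\<lambda>\<sigma>. frag_extend \<Phi> (\<Psi> \<sigma>)", OF assms(1), symmetric])
    fix \<sigma> assume "c \<sigma> \<noteq> 0" "\<tau> \<in> Poly_Mapping.keys (frag_extend \<Phi> (\<Psi> \<sigma>))"
    then obtain \<rho> where "\<rho> \<in> Poly_Mapping.keys (\<Psi> \<sigma>)" "\<tau> \<in> Poly_Mapping.keys (\<Phi> \<rho>)"
      using keys_frag_extend[of \<Phi> "\<Psi> \<sigma>"] by blast
    with \<open>c \<sigma> \<noteq> 0\<close> show "\<sigma> \<in> S"
      by (rule assms(2))
  qed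
  finally show ?thesis .
qed

lemma coeff_extend_summable_abs:
  assumes summable: "(\<lambda>\<sigma>. \<bar>c \<sigma>\<bar>) summable_on UNIV"
    and finite: "\<And>\<tau>. finite {\<sigma>. c \<sigma> \<noteq> 0 \<and> \<tau> \<in> Poly_Mapping.keys (\<Phi> \<sigma>)}"
    and bound: "\<And>\<sigma> F. finite F \<Longrightarrow> (\<Sum>\<tau>\<in>F. \<bar>of_int (Poly_Mapping.lookup (\<Phi> \<sigma>) \<tau>)\<bar>) \<le> (B::real)"
  shows "(\<lambda>\<tau>. \<bar>coeff_extend \<Phi> c \<tau>\<bar>) summable_on UNIV"
proof (rule nonneg_bdd_above_summable_on)
  have "0 \<le> B"
    using bound[of "{}"] by simp
  show "bdd_above (sum (\<lambda>\<tau>. \<bar>coeff_extend \<Phi> c \<tau>\<bar>) ` {F. F \<subseteq> UNIV \<and> finite F})"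
  proof (rule bdd_aboveI2)
    fix F :: "'b set" assume "F \<in> {F. F \<subseteq> UNIV \<and> finite F}"
    then have "finite F" by simp
    define S where "S = (\<Union>\<tau>\<in>F. {\<sigma>. c \<sigma> \<noteq> 0 \<and> \<tau> \<in> Poly_Mapping.keys (\<Phi> \<sigma>)})"
    have "finite S"
      using \<open>finite F\<close> finite by (simp add: S_def)
    have "(\<Sum>\<tau>\<in>F. \<bar>coeff_extend \<Phi> c \<tau>\<bar>) =
            (\<Sum>\<tau>\<in>F. \<bar>\<Sum>\<sigma>\<in>S. c \<sigma> * of_int (Poly_Mapping.lookup (\<Phi> \<sigma>) \<tau>)\<bar>)"
      by (intro sum.cong refl arg_cong[where f = abs] coeff_extend_eq_sum[OF \<open>finite S\<close>]) (auto simp: S_def)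
    also have "\<dots> \<le> (\<Sum>\<tau>\<in>F. \<Sum>\<sigma>\<in>S. \<bar>c \<sigma>\<bar> * \<bar>of_int (Poly_Mapping.lookup (\<Phi> \<sigma>) \<tau>)\<bar>)"
      by (intro sum_mono order_trans[OF sum_abs]) (simp add: abs_mult)
    also have "\<dots> = (\<Sum>\<sigma>\<in>S. \<bar>c \<sigma>\<bar> * (\<Sum>\<tau>\<in>F. \<bar>of_int (Poly_Mapping.lookup (\<Phi> \<sigma>) \<tau>)\<bar>))"
      by (simp only: sum_distrib_left) (rule sum.swap)
    also have "\<dots> \<le> (\<Sum>\<sigma>\<in>S. \<bar>c \<sigma>\<bar> * B)"
      by (intro sum_mono mult_left_mono bound[OF \<open>finite F\<close>]) simp
    also have "\<dots> = B * (\<Sum>\<sigma>\<in>S. \<bar>c \<sigma>\<bar>)"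
      by (simp add: sum_distrib_left mult.commute)
    also have "\<dots> \<le> B * infsum (\<lambda>\<sigma>. \<bar>c \<sigma>\<bar>) UNIV"
      by (intro mult_left_mono finite_sum_le_infsum[OF summable \<open>finite S\<close>] \<open>0 \<le> B\<close>) auto
    finally show "(\<Sum>\<tau>\<in>F. \<bar>coeff_extend \<Phi> c \<tau>\<bar>) \<le> B * infsum (\<lambda>\<sigma>. \<bar>c \<sigma>\<bar>) UNIV" .
  qed
qed simp

lemma push_eq_coeff_extend: "push h m i c = coeff_extend (\<lambda>\<sigma>. frag_of (fmap h m i \<sigma>)) c"
  unfolding push_def coeff_extend_def fun_eq_iff by (intro allI sum.cong) (auto split: if_splits)

lemma chain_boundary_eq_frag_extend:
  "chain_boundary p x = frag_extend (\<lambda>\<sigma>. chain_boundary p (frag_of \<sigma>)) x"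
  by (cases "p = 0") (simp_all add: chain_boundary_def frag_extend_eq_0 cong: frag_extend_eq)

lemma lookup_chain_boundary_of:
  assumes "0 < p"
  shows "Poly_Mapping.lookup (chain_boundary p (frag_of \<sigma>)) \<tau> =
           (\<Sum>k\<le>p. (-1) ^ k * (if singular_face p k \<sigma> = \<tau> then 1 else 0))"
  using assms by (simp add: chain_boundary_of lookup_sum) (intro sum.cong refl, auto)

lemma keys_chain_boundary_of:
  assumes "\<tau> \<in> Poly_Mapping.keys (chain_boundary p (frag_of \<sigma>))"
  obtains k where "0 < p" "k \<le> p" "\<tau> = singular_face p k \<sigma>"
proof -
  have "0 < p"
    using assms by (auto simp: chain_boundary_of split: if_splits)
  moreover have "\<exists>k\<le>p. singular_face p k \<sigma> = \<tau>"
  proof (rule ccontr)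
    assume "\<not> (\<exists>k\<le>p. singular_face p k \<sigma> = \<tau>)"
    then have "Poly_Mapping.lookup (chain_boundary p (frag_of \<sigma>)) \<tau> = 0"
      using \<open>0 < p\<close> by (simp add: lookup_chain_boundary_of)
    with assms show False
      by (simp add: in_keys_iff)
  qed
  ultimately show ?thesis
    using that by auto
qed

lemma singular_face_image:
  assumes "0 < p" "k \<le> p"
  shows "singular_face p k \<sigma> ` standard_simplex (p - 1) \<subseteq> \<sigma> ` standard_simplex p"
  using assms simplical_face_in_standard_simplex[of p k] by (auto simp: singular_face_def)

lemma bd_eq_coeff_extend:
  assumes "0 < i" "finite S" "\<And>\<sigma> k. c \<sigma> \<noteq> 0 \<Longrightarrow> k \<le> i \<Longrightarrow> singular_face i k \<sigma> = \<tau> \<Longrightarrow> \<sigma> \<in> S"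
  shows "bd i c \<tau> = coeff_extend (\<lambda>\<sigma>. chain_boundary i (frag_of \<sigma>)) c \<tau>"
proof -
  have "coeff_extend (\<lambda>\<sigma>. chain_boundary i (frag_of \<sigma>)) c \<tau> =
          (\<Sum>\<sigma>\<in>S. c \<sigma> * of_int (Poly_Mapping.lookup (chain_boundary i (frag_of \<sigma>)) \<tau>))"
  proof (rule coeff_extend_eq_sum[OF assms(2)])
    fix \<sigma> assume "c \<sigma> \<noteq> 0" "\<tau> \<in> Poly_Mapping.keys (chain_boundary i (frag_of \<sigma>))"
    then obtain k where "k \<le> i" "\<tau> = singular_face i k \<sigma>"
      by (elim keys_chain_boundary_of)
    with \<open>c \<sigma> \<noteq> 0\<close> show "\<sigma> \<in> S"
      by (intro assms(3)) auto
  qed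
  also have "\<dots> = (\<Sum>\<sigma>\<in>S. \<Sum>k\<le>i. (-1) ^ k * (if singular_face i k \<sigma> = \<tau> then c \<sigma> else 0))"
    by (simp add: lookup_chain_boundary_of[OF assms(1)] sum_distrib_left if_distrib[of real_of_int]
        if_distrib[of "\<lambda>u. _ * u"] mult.commute cong: if_cong)
  also have "\<dots> = (\<Sum>k\<le>i. (-1) ^ k * (\<Sum>\<sigma>\<in>S. if singular_face i k \<sigma> = \<tau> then c \<sigma> else 0))"
    by (simp only: sum_distrib_left) (rule sum.swap)
  also have "\<dots> = bd i c \<tau>"
  proof -
    have "(\<Sum>\<sigma>\<in>S. if singular_face i k \<sigma> = \<tau> then c \<sigma> else 0) =
            sum c {\<sigma>. c \<sigma> \<noteq> 0 \<and> singular_face i k \<sigma> = \<tau>}" if "k \<le> i" for k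
    proof -
      have "(\<Sum>\<sigma>\<in>S. if singular_face i k \<sigma> = \<tau> then c \<sigma> else 0) = sum c {\<sigma>\<in>S. singular_face i k \<sigma> = \<tau>}"
        by (simp add: sum.inter_filter assms(2))
      also have "\<dots> = sum c {\<sigma>. c \<sigma> \<noteq> 0 \<and> singular_face i k \<sigma> = \<tau>}"
        by (rule sum.mono_neutral_right) (use assms(2,3) that in auto)
      finally show ?thesis .
    qed
    then show ?thesis
      by (simp add: bd_def)
  qed
  finally show ?thesis ..
qed

section \<open>The prism operator\<close>

definition point_finite :: "('s \<Rightarrow> real) \<Rightarrow> ('s \<Rightarrow> 'a set) \<Rightarrow> bool" where
  "point_finite c K \<longleftrightarrow> (\<forall>p. finite {\<sigma>. c \<sigma> \<noteq> 0 \<and> p \<in> K \<sigma>})"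

lemma point_finite_image_subset:
  assumes "point_finite c K"
  shows "finite {\<sigma>. c \<sigma> \<noteq> 0 \<and> \<tau> ` standard_simplex p \<subseteq> K \<sigma>}"
proof -
  obtain v where "v \<in> standard_simplex p"
    using nonempty_standard_simplex by blast
  then have "{\<sigma>. c \<sigma> \<noteq> 0 \<and> \<tau> ` standard_simplex p \<subseteq> K \<sigma>} \<subseteq> {\<sigma>. c \<sigma> \<noteq> 0 \<and> \<tau> v \<in> K \<sigma>}"
    by blast
  moreover have "finite {\<sigma>. c \<sigma> \<noteq> 0 \<and> \<tau> v \<in> K \<sigma>}"
    using assms by (simp add: point_finite_def)
  ultimately show ?thesis
    by (rule finite_subset)
qed

definition prism_image :: "(nat \<Rightarrow> 'a lsimp \<Rightarrow> (nat \<Rightarrow> real) \<times> real \<Rightarrow> 'a) \<Rightarrow> nat \<Rightarrow> 'a lsimp \<Rightarrow> 'a set" where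
  "prism_image h i \<sigma> = h i \<sigma> ` (standard_simplex i \<times> {0..1})"

definition prism_operator ::
  "(nat \<Rightarrow> 'a lsimp \<Rightarrow> (nat \<Rightarrow> real) \<times> real \<Rightarrow> 'a) \<Rightarrow> nat \<Rightarrow> 'a rchain \<Rightarrow> 'a rchain" where
  "prism_operator h i = coeff_extend (\<lambda>\<sigma>. prism_chain i (h i \<sigma>))"

lemma keys_chain_boundary_image:
  assumes "\<tau> \<in> Poly_Mapping.keys (chain_boundary p (frag_of \<rho>))"
  shows "\<tau> ` standard_simplex (p - 1) \<subseteq> \<rho> ` standard_simplex p"
  using assms singular_face_image by (elim keys_chain_boundary_of) simp

lemma keys_prism_chain_singular_face_image:
  assumes compatible: "\<And>k x t. 0 < i \<Longrightarrow> k \<le> i \<Longrightarrow> x \<in> standard_simplex (i - 1) \<Longrightarrow> t \<in> {0..1} \<Longrightarrow>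
                         h (i - 1) (singular_face i k \<sigma>) (x, t) = h i \<sigma> (simplical_face k x, t)"
    and \<rho>: "\<rho> \<in> Poly_Mapping.keys (chain_boundary i (frag_of \<sigma>))"
    and \<tau>: "\<tau> \<in> Poly_Mapping.keys (prism_chain (i - 1) (h (i - 1) \<rho>))"
  shows "\<tau> ` standard_simplex i \<subseteq> prism_image h i \<sigma>"
proof -
  obtain k where k: "0 < i" "k \<le> i" "\<rho> = singular_face i k \<sigma>"
    using \<rho> by (elim keys_chain_boundary_of)
  have "\<tau> ` standard_simplex i \<subseteq> h (i - 1) \<rho> ` (standard_simplex (i - 1) \<times> {0..1})"
    using keys_prism_chain_image[OF \<tau>] k(1) by simp
  also have "\<dots> \<subseteq> prism_image h i \<sigma>"
    using k compatible simplical_face_in_standard_simplex[of i k] by (force simp: prism_image_def)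
  finally show ?thesis .
qed

lemma coeff_extend_chain_boundary:
  assumes "0 < i" "point_finite c (\<lambda>\<sigma>. \<sigma> ` standard_simplex i)"
  shows "coeff_extend (\<lambda>\<sigma>. chain_boundary i (frag_of \<sigma>)) c = bd i c"
proof
  fix \<tau>
  show "coeff_extend (\<lambda>\<sigma>. chain_boundary i (frag_of \<sigma>)) c \<tau> = bd i c \<tau>"
  proof (rule bd_eq_coeff_extend[OF assms(1), symmetric])
    show "finite {\<sigma>. c \<sigma> \<noteq> 0 \<and> \<tau> ` standard_simplex (i - 1) \<subseteq> \<sigma> ` standard_simplex i}"
      by (rule point_finite_image_subset[OF assms(2)])
    fix \<sigma> k assume "c \<sigma> \<noteq> 0" "k \<le> i" "singular_face i k \<sigma> = \<tau>"
    then show "\<sigma> \<in> {\<sigma>. c \<sigma> \<noteq> 0 \<and> \<tau> ` standard_simplex (i - 1) \<subseteq> \<sigma> ` standard_simplex i}"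
      using singular_face_image[of i k \<sigma>] assms(1) by auto
  qed
qed

text \<open>The coefficient of \<open>\<tau>\<close> in each of the chains below only involves the simplices \<open>\<sigma>\<close> whose
  prism image contains the image of \<open>\<tau>\<close>; point-finiteness makes these finitely many.\<close>

lemma bd_prism_operator:
  assumes "point_finite c (prism_image h i)"
  shows "bd (Suc i) (prism_operator h i c) \<tau> =
           coeff_extend (\<lambda>\<sigma>. chain_boundary (Suc i) (prism_chain i (h i \<sigma>))) c \<tau>"
proof -
  define P where "P = (\<lambda>\<sigma>. prism_chain i (h i \<sigma>))"
  define T where "T = {\<sigma>. c \<sigma> \<noteq> 0 \<and> \<tau> ` standard_simplex i \<subseteq> prism_image h i \<sigma>}"
  have "finite T"
    unfolding T_def by (rule point_finite_image_subset[OF assms])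
  have image: "\<tau> ` standard_simplex i \<subseteq> prism_image h i \<sigma>"
    if "\<rho> \<in> Poly_Mapping.keys (P \<sigma>)" "\<tau> ` standard_simplex i \<subseteq> \<rho> ` standard_simplex (Suc i)" for \<rho> \<sigma>
    using that keys_prism_chain_image by (fastforce simp: P_def prism_image_def)
  have "bd (Suc i) (coeff_extend P c) \<tau> =
          coeff_extend (\<lambda>\<rho>. chain_boundary (Suc i) (frag_of \<rho>)) (coeff_extend P c) \<tau>"
  proof (rule bd_eq_coeff_extend)
    show "finite (\<Union>\<sigma>\<in>T. Poly_Mapping.keys (P \<sigma>))"
      using \<open>finite T\<close> by simp
    fix \<rho> k assume \<rho>: "coeff_extend P c \<rho> \<noteq> 0" and k: "k \<le> Suc i" "singular_face (Suc i) k \<rho> = \<tau>"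
    obtain \<sigma> where \<sigma>: "c \<sigma> \<noteq> 0" "\<rho> \<in> Poly_Mapping.keys (P \<sigma>)"
      using \<rho> by (elim coeff_extend_nonzero)
    with k image[OF \<sigma>(2)] singular_face_image[of "Suc i" k \<rho>]
    show "\<rho> \<in> (\<Union>\<sigma>\<in>T. Poly_Mapping.keys (P \<sigma>))"
      by (auto simp: T_def)
  qed simp
  also have "\<dots> = coeff_extend (\<lambda>\<sigma>. frag_extend (\<lambda>\<rho>. chain_boundary (Suc i) (frag_of \<rho>)) (P \<sigma>)) c \<tau>"
  proof (rule coeff_extend_frag_extend[OF \<open>finite T\<close>])
    fix \<sigma> \<rho> assume "c \<sigma> \<noteq> 0" "\<rho> \<in> Poly_Mapping.keys (P \<sigma>)"
      "\<tau> \<in> Poly_Mapping.keys (chain_boundary (Suc i) (frag_of \<rho>))"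
    then show "\<sigma> \<in> T"
      using image keys_chain_boundary_image by (fastforce simp: T_def)
  qed
  finally show ?thesis
    by (simp add: prism_operator_def P_def flip: chain_boundary_eq_frag_extend)
qed

lemma prism_operator_bd:
  assumes compatible: "\<And>\<sigma> k x t. c \<sigma> \<noteq> 0 \<Longrightarrow> 0 < i \<Longrightarrow> k \<le> i \<Longrightarrow> x \<in> standard_simplex (i - 1) \<Longrightarrow>
                         t \<in> {0..1} \<Longrightarrow> h (i - 1) (singular_face i k \<sigma>) (x, t) = h i \<sigma> (simplical_face k x, t)"
    and "0 < i" "point_finite c (\<lambda>\<sigma>. \<sigma> ` standard_simplex i)" "point_finite c (prism_image h i)"
  shows "prism_operator h (i - 1) (bd i c) \<tau> =
     coeff_extend (\<lambda>\<sigma>. frag_extend (\<lambda>\<rho>. prism_chain (i - 1) (h (i - 1) \<rho>)) (chain_boundary i (frag_of \<sigma>))) c \<tau>"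
  unfolding prism_operator_def coeff_extend_chain_boundary[OF assms(2,3), symmetric]
proof (rule coeff_extend_frag_extend)
  show "finite {\<sigma>. c \<sigma> \<noteq> 0 \<and> \<tau> ` standard_simplex i \<subseteq> prism_image h i \<sigma>}"
    by (rule point_finite_image_subset[OF assms(4)])
  fix \<sigma> \<rho> assume c: "c \<sigma> \<noteq> 0" and \<rho>: "\<rho> \<in> Poly_Mapping.keys (chain_boundary i (frag_of \<sigma>))"
    and \<tau>: "\<tau> \<in> Poly_Mapping.keys (prism_chain (i - 1) (h (i - 1) \<rho>))"
  have "\<tau> ` standard_simplex i \<subseteq> prism_image h i \<sigma>"
  proof (rule keys_prism_chain_singular_face_image[where h = h and i = i and \<sigma> = \<sigma>, OF _ \<rho> \<tau>])
    fix k x t assume "0 < i" "k \<le> i" "x \<in> standard_simplex (i - 1)" "t \<in> {0..1::real}"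
    then show "h (i - 1) (singular_face i k \<sigma>) (x, t) = h i \<sigma> (simplical_face k x, t)"
      by (rule compatible[OF c])
  qed
  with c show "\<sigma> \<in> {\<sigma>. c \<sigma> \<noteq> 0 \<and> \<tau> ` standard_simplex i \<subseteq> prism_image h i \<sigma>}"
    by simp
qed

lemma prism_homotopy_keys_image:
  assumes compatible: "\<And>k x t. 0 < i \<Longrightarrow> k \<le> i \<Longrightarrow> x \<in> standard_simplex (i - 1) \<Longrightarrow> t \<in> {0..1} \<Longrightarrow>
                         h (i - 1) (singular_face i k \<sigma>) (x, t) = h i \<sigma> (simplical_face k x, t)"
    and \<tau>: "\<tau> \<in> Poly_Mapping.keys (chain_boundary (Suc i) (prism_chain i (h i \<sigma>)))
             \<union> Poly_Mapping.keys (frag_extend (\<lambda>\<rho>. prism_chain (i - 1) (h (i - 1) \<rho>)) (chain_boundary i (frag_of \<sigma>)))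
             \<union> Poly_Mapping.keys (frag_of (fmap h 0 i \<sigma>))"
  shows "\<tau> ` standard_simplex i \<subseteq> prism_image h i \<sigma>"
proof -
  consider \<rho> where "\<rho> \<in> Poly_Mapping.keys (prism_chain i (h i \<sigma>))"
      "\<tau> \<in> Poly_Mapping.keys (chain_boundary (Suc i) (frag_of \<rho>))"
    | \<rho> where "\<rho> \<in> Poly_Mapping.keys (chain_boundary i (frag_of \<sigma>))"
      "\<tau> \<in> Poly_Mapping.keys (prism_chain (i - 1) (h (i - 1) \<rho>))"
    | "\<tau> = fmap h 0 i \<sigma>"
  proof -
    have "chain_boundary (Suc i) (prism_chain i (h i \<sigma>)) =
            frag_extend (\<lambda>\<rho>. chain_boundary (Suc i) (frag_of \<rho>)) (prism_chain i (h i \<sigma>))"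
      by (rule chain_boundary_eq_frag_extend)
    then show ?thesis
      using that \<tau>
        keys_frag_extend[of "\<lambda>\<rho>. chain_boundary (Suc i) (frag_of \<rho>)" "prism_chain i (h i \<sigma>)"]
        keys_frag_extend[of "\<lambda>\<rho>. prism_chain (i - 1) (h (i - 1) \<rho>)" "chain_boundary i (frag_of \<sigma>)"]
      by (simp split: if_splits) blast
  qed
  then show ?thesis
  proof cases
    case (1 \<rho>)
    then show ?thesis
      using keys_chain_boundary_image[OF 1(2)] keys_prism_chain_image[OF 1(1)] by (fastforce simp: prism_image_def)
  next
    case (2 \<rho>)
    show ?thesis
      by (rule keys_prism_chain_singular_face_image[where h = h and i = i and \<sigma> = \<sigma>, OF compatible 2])
  next
    case 3
    then show ?thesis
      by (auto simp: prism_image_def fmap_def)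
  qed
qed

lemma prism_operator_homotopy:
  assumes compatible: "\<And>\<sigma> k x t. c \<sigma> \<noteq> 0 \<Longrightarrow> 0 < i \<Longrightarrow> k \<le> i \<Longrightarrow> x \<in> standard_simplex (i - 1) \<Longrightarrow>
                         t \<in> {0..1} \<Longrightarrow> h (i - 1) (singular_face i k \<sigma>) (x, t) = h i \<sigma> (simplical_face k x, t)"
    and fin_simplices: "point_finite c (\<lambda>\<sigma>. \<sigma> ` standard_simplex i)"
    and fin_prisms: "point_finite c (prism_image h i)"
  shows "push h 1 i c \<tau> - push h 0 i c \<tau> =
           bd (Suc i) (prism_operator h i c) \<tau> + (if i = 0 then 0 else prism_operator h (i - 1) (bd i c) \<tau>)"
proof -
  define f where "f = (\<lambda>m \<sigma>. frag_of (fmap h m i \<sigma>))"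
  define A where "A = (\<lambda>\<sigma>. chain_boundary (Suc i) (prism_chain i (h i \<sigma>)))"
  define B where "B = (\<lambda>\<sigma>. frag_extend (\<lambda>\<rho>. prism_chain (i - 1) (h (i - 1) \<rho>)) (chain_boundary i (frag_of \<sigma>)))"
  define T where "T = {\<sigma>. c \<sigma> \<noteq> 0 \<and> \<tau> ` standard_simplex i \<subseteq> prism_image h i \<sigma>}"
  have "finite T"
    unfolding T_def by (rule point_finite_image_subset[OF fin_prisms])
  have local: "\<sigma> \<in> T" if c: "c \<sigma> \<noteq> 0"
    and \<tau>: "\<tau> \<in> Poly_Mapping.keys (A \<sigma>) \<union> Poly_Mapping.keys (B \<sigma>) \<union> Poly_Mapping.keys (f 0 \<sigma>)" for \<sigma>
  proof -
    have "\<tau> ` standard_simplex i \<subseteq> prism_image h i \<sigma>"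
    proof (rule prism_homotopy_keys_image[where h = h and i = i and \<sigma> = \<sigma>])
      fix k x t assume "0 < i" "k \<le> i" "x \<in> standard_simplex (i - 1)" "t \<in> {0..1::real}"
      then show "h (i - 1) (singular_face i k \<sigma>) (x, t) = h i \<sigma> (simplical_face k x, t)"
        by (rule compatible[OF c])
    qed (rule \<tau>[unfolded A_def B_def f_def])
    with c show ?thesis
      by (simp add: T_def)
  qed
  have "coeff_extend (\<lambda>\<sigma>. (A \<sigma> + B \<sigma>) + f 0 \<sigma>) c \<tau> = coeff_extend (\<lambda>\<sigma>. A \<sigma> + B \<sigma>) c \<tau> + coeff_extend (f 0) c \<tau>"
  proof (rule coeff_extend_add[OF \<open>finite T\<close>])
    fix \<sigma> assume "c \<sigma> \<noteq> 0" "\<tau> \<in> Poly_Mapping.keys (A \<sigma> + B \<sigma>) \<union> Poly_Mapping.keys (f 0 \<sigma>)"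
    then show "\<sigma> \<in> T"
      using local keys_add[of "A \<sigma>" "B \<sigma>"] by blast
  qed
  moreover have "coeff_extend (\<lambda>\<sigma>. A \<sigma> + B \<sigma>) c \<tau> = coeff_extend A c \<tau> + coeff_extend B c \<tau>"
    by (rule coeff_extend_add[OF \<open>finite T\<close>]) (auto intro: local)
  moreover have "coeff_extend (f 1) c = coeff_extend (\<lambda>\<sigma>. (A \<sigma> + B \<sigma>) + f 0 \<sigma>) c"
  proof (rule coeff_extend_cong)
    fix \<sigma> assume "c \<sigma> \<noteq> 0"
    then show "f 1 \<sigma> = A \<sigma> + B \<sigma> + f 0 \<sigma>"
      using chain_boundary_prism_chain_compatible[of i "h (i - 1)" \<sigma> "h i \<sigma>"] compatible
      by (simp add: A_def B_def f_def fmap_def)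
  qed
  moreover have "coeff_extend B c \<tau> = (if i = 0 then 0 else prism_operator h (i - 1) (bd i c) \<tau>)"
    using prism_operator_bd[OF compatible _ fin_simplices fin_prisms] by (simp add: B_def chain_boundary_def)
  ultimately show ?thesis
    by (simp add: push_eq_coeff_extend f_def A_def bd_prism_operator[OF fin_prisms])
qed

section \<open>Lipschitz estimates\<close>

lemma sdist_nonneg: "0 \<le> sdist n x y"
  by (simp add: sdist_def sum_nonneg)

lemma pdist_nonneg: "0 \<le> pdist n p q"
  by (simp add: pdist_def sum_nonneg add_nonneg_nonneg)

lemma lip_simplex_L_mono:
  assumes "lip_simplex_L M d i \<sigma> L" "L \<le> L'"
  shows "lip_simplex_L M d i \<sigma> L'"
  using assms unfolding lip_simplex_L_def by (meson mult_right_mono order_trans sdist_nonneg)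

lemma lip_prism_L_mono:
  assumes "lip_prism_L M d i H L" "L \<le> L'"
  shows "lip_prism_L M d i H L'"
  using assms unfolding lip_prism_L_def by (meson mult_right_mono order_trans pdist_nonneg)

lemma lip_prism_L_nonneg:
  assumes "h_lipschitz M d h" "lip_simplex M d i \<sigma>"
  obtains L where "0 \<le> L" "lip_prism_L M d i (h i \<sigma>) L"
proof -
  obtain L where "lip_prism_L M d i (h i \<sigma>) L"
    using assms by (auto simp: h_lipschitz_def)
  then have "lip_prism_L M d i (h i \<sigma>) (max L 0)"
    by (rule lip_prism_L_mono) simp
  then show ?thesis
    by (rule that[rotated]) simp
qed

lemma lip_prism_L_uniform:
  assumes "lip_bounded M d h" "lf_lip_chain M d i c"
  obtains L where "0 \<le> L" "\<And>\<sigma>. c \<sigma> \<noteq> 0 \<Longrightarrow> lip_prism_L M d i (h i \<sigma>) L"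
proof -
  obtain L where L: "\<forall>\<sigma>\<in>csupp c. lip_simplex_L M d i \<sigma> L"
    using assms(2) by (auto simp: lf_lip_chain_def)
  obtain b where b0: "\<forall>i L. 0 \<le> L \<longrightarrow> 0 \<le> b i L"
    and b: "\<forall>i \<sigma> L. 0 \<le> L \<longrightarrow> lip_simplex_L M d i \<sigma> L \<longrightarrow> lip_prism_L M d i (h i \<sigma>) (b i L)"
    using assms(1) unfolding lip_bounded_def by blast
  have "lip_prism_L M d i (h i \<sigma>) (b i (max L 0))" if "c \<sigma> \<noteq> 0" for \<sigma>
  proof -
    have "lip_simplex_L M d i \<sigma> L"
      using L that by (simp add: csupp_def)
    then have "lip_simplex_L M d i \<sigma> (max L 0)"
      by (rule lip_simplex_L_mono) simp
    then show ?thesis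
      using b by simp
  qed
  moreover have "0 \<le> b i (max L 0)"
    using b0 by simp
  ultimately show ?thesis
    using that by blast
qed

lemma sum_abs_diff_le_sdist: "(\<Sum>j\<le>n. \<bar>x j - y j\<bar>) \<le> (real n + 1) * sdist n x y"
proof -
  have "\<bar>x j - y j\<bar> \<le> sdist n x y" if "j \<le> n" for j
    using member_le_L2_set[of "{..n}" j "\<lambda>j. \<bar>x j - y j\<bar>"] that by (simp add: L2_set_def sdist_def)
  then have "(\<Sum>j\<le>n. \<bar>x j - y j\<bar>) \<le> (\<Sum>j\<le>n. sdist n x y)"
    by (intro sum_mono) simp
  then show ?thesis
    by (simp add: algebra_simps)
qed

lemma lip_simplex_L_slice:
  assumes "lip_prism_L M d i H L" "t \<in> {0..1}"
  shows "lip_simplex_L M d i (restrict (\<lambda>x. H (x, t)) (standard_simplex i)) L"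
  unfolding lip_simplex_L_def
proof (intro conjI ballI)
  show "restrict (\<lambda>x. H (x, t)) (standard_simplex i) ` standard_simplex i \<subseteq> M"
    using assms by (auto simp: lip_prism_L_def)
  fix x y assume "x \<in> standard_simplex i" "y \<in> standard_simplex i"
  then have "d (H (x, t)) (H (y, t)) \<le> L * pdist i (x, t) (y, t)"
    using assms by (auto simp: lip_prism_L_def)
  with \<open>x \<in> standard_simplex i\<close> \<open>y \<in> standard_simplex i\<close>
  show "d (restrict (\<lambda>x. H (x, t)) (standard_simplex i) x) (restrict (\<lambda>x. H (x, t)) (standard_simplex i) y)
          \<le> L * sdist i x y"
    by (simp add: pdist_def sdist_def)
qed simp

lemma abs_oriented_simplex_diff_le:
  assumes "\<And>j n. \<bar>l j n\<bar> \<le> 1" "x \<in> standard_simplex p" "y \<in> standard_simplex p"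
  shows "\<bar>oriented_simplex p l x n - oriented_simplex p l y n\<bar> \<le> (\<Sum>j\<le>p. \<bar>x j - y j\<bar>)"
proof -
  have "\<bar>oriented_simplex p l x n - oriented_simplex p l y n\<bar> = \<bar>\<Sum>j\<le>p. l j n * (x j - y j)\<bar>"
    using assms(2,3) by (simp add: oriented_simplex_def right_diff_distrib sum_subtractf)
  also have "\<dots> \<le> (\<Sum>j\<le>p. \<bar>l j n\<bar> * \<bar>x j - y j\<bar>)"
    by (rule order_trans[OF sum_abs]) (simp add: abs_mult)
  also have "\<dots> \<le> (\<Sum>j\<le>p. \<bar>x j - y j\<bar>)"
    by (intro sum_mono mult_left_le_one_le) (simp_all add: assms(1))
  finally show ?thesis .
qed

lemma pdist_shift: "pdist q (z \<circ> Suc, z 0) (w \<circ> Suc, w 0) = L2_set (\<lambda>l. z l - w l) {..Suc q}"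
  unfolding pdist_def L2_set_def by (simp add: sum.atMost_Suc_shift add.commute del: sum.atMost_Suc)

lemma lip_simplex_L_prism_piece:
  assumes H: "lip_prism_L M d q H L" and "0 \<le> L" "i \<le> q"
  shows "lip_simplex_L M d (Suc q) (prism_piece q H i) ((real q + 2)\<^sup>2 * L)"
  unfolding lip_simplex_L_def
proof (intro conjI ballI)
  let ?z = "prism_simplex q i"
  show "prism_piece q H i \<in> extensional (standard_simplex (Suc q))"
    by (simp add: prism_piece_def simplex_map_def)
  show "prism_piece q H i ` standard_simplex (Suc q) \<subseteq> M"
    using order_trans[OF prism_piece_image[OF assms(3), of H]] H by (simp add: lip_prism_L_def)
  fix x y assume x: "x \<in> standard_simplex (Suc q)" and y: "y \<in> standard_simplex (Suc q)"
  have "pdist q (?z x \<circ> Suc, ?z x 0) (?z y \<circ> Suc, ?z y 0) \<le> (\<Sum>l\<le>Suc q. \<bar>?z x l - ?z y l\<bar>)"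
    unfolding pdist_shift by (rule L2_set_le_sum_abs)
  also have "\<dots> \<le> (\<Sum>l\<le>Suc q. \<Sum>j\<le>Suc q. \<bar>x j - y j\<bar>)"
    unfolding prism_simplex_def
    by (intro sum_mono abs_oriented_simplex_diff_le x y) (simp add: prism_vertex_def lift_vertex_def)
  also have "\<dots> = (real q + 2) * (\<Sum>j\<le>Suc q. \<bar>x j - y j\<bar>)"
    by (simp del: sum.atMost_Suc)
  also have "\<dots> \<le> (real q + 2) * ((real q + 2) * sdist (Suc q) x y)"
    using sum_abs_diff_le_sdist[where n = "Suc q" and x = x and y = y]
    by (intro mult_left_mono) (simp_all add: add.commute)
  also have "\<dots> = (real q + 2)\<^sup>2 * sdist (Suc q) x y"
    by (simp add: power2_eq_square)
  finally have "L * pdist q (?z x \<circ> Suc, ?z x 0) (?z y \<circ> Suc, ?z y 0) \<le> L * ((real q + 2)\<^sup>2 * sdist (Suc q) x y)"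
    by (rule mult_left_mono) (rule assms(2))
  moreover have "\<forall>p\<in>standard_simplex q \<times> {0..1}. \<forall>p'\<in>standard_simplex q \<times> {0..1}. d (H p) (H p') \<le> L * pdist q p p'"
    using H unfolding lip_prism_L_def by (rule conjunct2)
  then have "d (H (?z x \<circ> Suc, ?z x 0)) (H (?z y \<circ> Suc, ?z y 0)) \<le> L * pdist q (?z x \<circ> Suc, ?z x 0) (?z y \<circ> Suc, ?z y 0)"
    using prism_simplex_in_prism[OF assms(3) x] prism_simplex_in_prism[OF assms(3) y] by blast
  ultimately show "d (prism_piece q H i x) (prism_piece q H i y) \<le> (real q + 2)\<^sup>2 * L * sdist (Suc q) x y"
    using x y by (simp add: prism_piece_def simplex_map_def mult.assoc mult.left_commute)
qed

section \<open>Local finiteness\<close>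

lemma in_chains_lip_simplex:
  assumes "in_chains M d kind sm i c" "c \<sigma> \<noteq> 0"
  shows "lip_simplex M d i \<sigma>"
  using assms by (auto simp: in_chains_def csupp_def)

lemma finite_prism_images_meeting_compact:
  assumes lf: "preserves_local_finiteness M d h" and c: "in_chains M d kind sm i c" and "kind \<noteq> Kfin"
    and K: "compactin (Metric_space.mtopology M d) K"
  shows "finite {\<sigma>. c \<sigma> \<noteq> 0 \<and> prism_image h i \<sigma> \<inter> K \<noteq> {}}"
proof (rule ccontr)
  txt \<open>The hypothesis on \<open>h\<close> is stated for sequences, so we pass to an injective sequence.\<close>
  assume "infinite {\<sigma>. c \<sigma> \<noteq> 0 \<and> prism_image h i \<sigma> \<inter> K \<noteq> {}}"
  then obtain s :: "nat \<Rightarrow> _" where s: "inj s" "range s \<subseteq> {\<sigma>. c \<sigma> \<noteq> 0 \<and> prism_image h i \<sigma> \<inter> K \<noteq> {}}"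
    using infinite_countable_subset by blast
  have lip: "lip_simplex M d i (s j)" for j
    using s(2) in_chains_lip_simplex[OF c] by auto
  have fin_s: "finite {j. s j ` standard_simplex i \<inter> K' \<noteq> {}}" if "compactin (Metric_space.mtopology M d) K'" for K'
  proof -
    have "finite {\<sigma>\<in>csupp c. \<sigma> ` standard_simplex i \<inter> K' \<noteq> {}}"
      using c \<open>kind \<noteq> Kfin\<close> that by (simp add: in_chains_def lf_lip_chain_def)
    then have "finite (s -` {\<sigma>\<in>csupp c. \<sigma> ` standard_simplex i \<inter> K' \<noteq> {}})"
      using s(1) by (rule finite_vimageI)
    moreover have "{j. s j ` standard_simplex i \<inter> K' \<noteq> {}} \<subseteq> s -` {\<sigma>\<in>csupp c. \<sigma> ` standard_simplex i \<inter> K' \<noteq> {}}"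
      using s(2) by (auto simp: csupp_def)
    ultimately show ?thesis
      by (rule finite_subset[rotated])
  qed
  have "finite {j. h i (s j) ` (standard_simplex i \<times> {0..1}) \<inter> K \<noteq> {}}"
    using lf[unfolded preserves_local_finiteness_def, rule_format, of "\<lambda>_. i" s K, OF lip fin_s K] .
  moreover have "{j. h i (s j) ` (standard_simplex i \<times> {0..1}) \<inter> K \<noteq> {}} = UNIV"
    using s(2) by (auto simp: prism_image_def)
  ultimately show False
    by simp
qed

lemma point_finiteI:
  assumes "Metric_space M d" "\<And>\<sigma>. c \<sigma> \<noteq> 0 \<Longrightarrow> X \<sigma> \<subseteq> M"
    and "\<And>K. compactin (Metric_space.mtopology M d) K \<Longrightarrow> finite {\<sigma>. c \<sigma> \<noteq> 0 \<and> X \<sigma> \<inter> K \<noteq> {}}"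
  shows "point_finite c X"
  unfolding point_finite_def
proof
  fix p
  show "finite {\<sigma>. c \<sigma> \<noteq> 0 \<and> p \<in> X \<sigma>}"
  proof (cases "p \<in> M")
    case True
    then have "compactin (Metric_space.mtopology M d) {p}"
      by (simp add: Metric_space.topspace_mtopology[OF assms(1)])
    then have "finite {\<sigma>. c \<sigma> \<noteq> 0 \<and> X \<sigma> \<inter> {p} \<noteq> {}}"
      by (rule assms(3))
    then show ?thesis
      by (rule finite_subset[rotated]) auto
  next
    case False
    then have empty: "{\<sigma>. c \<sigma> \<noteq> 0 \<and> p \<in> X \<sigma>} = {}"
      using assms(2) by blast
    show ?thesis
      unfolding empty by simp
  qed
qed

lemma point_finite_finite_support: "finite (csupp c) \<Longrightarrow> point_finite c X"
  unfolding point_finite_def csupp_def by (auto elim: rev_finite_subset)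

lemma point_finite_simplices:
  assumes "Metric_space M d" "in_chains M d kind sm i c"
  shows "point_finite c (\<lambda>\<sigma>. \<sigma> ` standard_simplex i)"
proof (cases "kind = Kfin")
  case True
  then show ?thesis
    using assms(2) by (intro point_finite_finite_support) (simp add: in_chains_def)
next
  case False
  have "\<sigma> ` standard_simplex i \<subseteq> M" if "c \<sigma> \<noteq> 0" for \<sigma>
    using assms(2) that by (auto simp: in_chains_def csupp_def lip_simplex_def lip_simplex_L_def)
  moreover have "finite {\<sigma>. c \<sigma> \<noteq> 0 \<and> \<sigma> ` standard_simplex i \<inter> K \<noteq> {}}"
    if "compactin (Metric_space.mtopology M d) K" for K
  proof -
    have "lf_lip_chain M d i c"
      using assms(2) False by (simp add: in_chains_def)
    then have "finite {\<sigma>\<in>csupp c. \<sigma> ` standard_simplex i \<inter> K \<noteq> {}}"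
      using that by (simp add: lf_lip_chain_def)
    then show ?thesis
      by (simp add: csupp_def)
  qed
  ultimately show ?thesis
    by (rule point_finiteI[OF assms(1)])
qed

lemma point_finite_prism_images:
  assumes "Metric_space M d" "h_lipschitz M d h" "in_chains M d kind sm i c"
    and "kind = Kfin \<or> preserves_local_finiteness M d h"
  shows "point_finite c (prism_image h i)"
proof (cases "kind = Kfin")
  case True
  then show ?thesis
    using assms(3) by (intro point_finite_finite_support) (simp add: in_chains_def)
next
  case False
  then have lf: "preserves_local_finiteness M d h"
    using assms(4) by simp
  have "prism_image h i \<sigma> \<subseteq> M" if "c \<sigma> \<noteq> 0" for \<sigma>
    using assms(2,3) that by (auto simp: in_chains_def csupp_def h_lipschitz_def lip_prism_L_def prism_image_def)
  moreover have "finite {\<sigma>. c \<sigma> \<noteq> 0 \<and> prism_image h i \<sigma> \<inter> K \<noteq> {}}"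
    if "compactin (Metric_space.mtopology M d) K" for K
    by (rule finite_prism_images_meeting_compact[OF lf assms(3) False that])
  ultimately show ?thesis
    by (rule point_finiteI[OF assms(1)])
qed

section \<open>Smoothness\<close>

lemma has_vector_derivative_at_shift:
  assumes "((\<lambda>\<tau>. G (u + \<tau>)) has_vector_derivative D) (at 0)"
  shows "(G has_vector_derivative D) (at u)"
proof -
  have "((\<lambda>\<tau>. G (u + \<tau>)) \<circ> (\<lambda>v. v - u) has_vector_derivative 1 *\<^sub>R D) (at u)"
    by (rule vector_diff_chain_at) (use assms in \<open>auto intro!: derivative_eq_intros\<close>)
  then show ?thesis
    by (simp add: o_def)
qed

lemma has_vector_derivative_diagonal:
  fixes f :: "real \<Rightarrow> real \<Rightarrow> 'b::real_normed_vector"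
  assumes W: "open W" "(0, 0) \<in> W"
    and fx: "((\<lambda>u. f u 0) has_vector_derivative a) (at 0)"
    and fy: "\<And>u v. (u, v) \<in> W \<Longrightarrow> ((\<lambda>v. f u v) has_vector_derivative g (u, v)) (at v)"
    and g: "continuous_on W g"
  shows "((\<lambda>t. f t t) has_vector_derivative a + g (0, 0)) (at 0)"
proof -
  obtain r where "r > 0" and r: "ball (0, 0) r \<subseteq> W"
    using W openE by blast
  define X where "X = ball (0::real) (r / 2)"
  have XX: "X \<times> X \<subseteq> W"
  proof
    fix p assume "p \<in> X \<times> X"
    then have "dist p (0, 0) < r"
      using norm_Pair_le[of "fst p" "snd p"] by (auto simp: X_def dist_norm)
    then show "p \<in> W"
      using r by (auto simp: dist_commute)
  qed
  have "open (X \<times> X)" "(0, 0) \<in> X \<times> X"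
    using \<open>r > 0\<close> by (auto simp: X_def open_Times)
  have "((\<lambda>(u, v). f u v) has_derivative (\<lambda>(tu, tv). tu *\<^sub>R a + blinfun_scaleR_left (g (0, 0)) tv))
          (at (0, 0) within X \<times> X)"
  proof (rule has_derivative_partialsI[where fx = "\<lambda>h. h *\<^sub>R a" and fy = "\<lambda>u v. blinfun_scaleR_left (g (u, v))"])
    show "((\<lambda>u. f u 0) has_derivative (\<lambda>h. h *\<^sub>R a)) (at 0 within X)"
      using fx unfolding has_vector_derivative_def by (rule has_derivative_at_withinI)
    show "((\<lambda>v. f u v) has_derivative blinfun_apply (blinfun_scaleR_left (g (u, v)))) (at v within X)"
      if "u \<in> X" "v \<in> X" for u v
      using fy[of u v] XX that by (auto simp: has_vector_derivative_def intro: has_derivative_at_withinI)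
    have "continuous (at (0, 0) within X \<times> X) g"
      using g W by (simp add: continuous_on_eq_continuous_at continuous_at_imp_continuous_at_within)
    then show "continuous (at (0, 0) within X \<times> X) (\<lambda>(u, v). blinfun_scaleR_left (g (u, v)))"
      using bounded_linear.continuous[OF bounded_linear_blinfun_scaleR_left] by (simp add: case_prod_beta')
    show "0 \<in> X" "convex X"
      using \<open>r > 0\<close> by (auto simp: X_def)
  qed
  then have "((\<lambda>(u, v). f u v) has_derivative (\<lambda>(tu, tv). tu *\<^sub>R a + tv *\<^sub>R g (0, 0))) (at (0, 0))"
    using at_within_open[OF \<open>(0, 0) \<in> X \<times> X\<close> \<open>open (X \<times> X)\<close>] by simp
  then have "((\<lambda>(u, v). f u v) \<circ> (\<lambda>t. (t, t)) has_derivative (\<lambda>(tu, tv). tu *\<^sub>R a + tv *\<^sub>R g (0, 0)) \<circ> (\<lambda>h. (h, h))) (at 0)"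
    by (intro diff_chain_at) (auto intro!: derivative_eq_intros)
  then show ?thesis
    by (simp add: has_vector_derivative_def o_def scaleR_add_right)
qed

lemma sdir_in_aff_simplex:
  assumes "x \<in> aff_simplex q" "1 \<le> j" "j \<le> q"
  shows "(\<lambda>l. x l + u * sdir j l) \<in> aff_simplex q"
proof -
  have "(\<Sum>l\<le>q. sdir j l) = (\<Sum>l\<le>q. (if l = j then 1 else 0) - (if l = 0 then 1 else 0))"
    using assms by (intro sum.cong) (auto simp: sdir_def)
  also have "\<dots> = 0"
    using assms by (simp add: sum_subtractf)
  finally show ?thesis
    using assms by (auto simp: aff_simplex_def sdir_def sum.distrib sum_distrib_left[symmetric])
qed

lemma openin_prod_subtopology_powertop:
  assumes "openin (prod_topology (subtopology (powertop_real UNIV) S) euclideanreal) U"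
  shows "U \<subseteq> S \<times> UNIV"
    and "openin (subtopology (prod_topology (powertop_real UNIV) euclideanreal) (S \<times> UNIV)) U"
  using openin_subset[OF assms] assms by (auto simp: subtopology_Times)

lemma smooth_prism_diagonal_derivative:
  fixes F :: "(nat \<Rightarrow> real) \<times> real \<Rightarrow> 'b::real_normed_vector"
  assumes U: "openin (prod_topology (subtopology (powertop_real UNIV) (aff_simplex q)) euclideanreal) U"
    and Dj: "\<And>x s. (x, s) \<in> U \<Longrightarrow> ((\<lambda>t. F (\<lambda>l. x l + t * sdir j l, s)) has_vector_derivative D (x, s)) (at 0)"
    and Dt: "\<And>x s. (x, s) \<in> U \<Longrightarrow> ((\<lambda>t. F (x, s + t)) has_vector_derivative Dt (x, s)) (at 0)"
    and cDt: "continuous_map (subtopology (prod_topology (powertop_real UNIV) euclideanreal) U) euclidean Dt"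
    and j: "1 \<le> j" "j \<le> q" and xs: "(x, s) \<in> U"
  shows "((\<lambda>t. F (\<lambda>l. x l + t * sdir j l, s + t)) has_vector_derivative D (x, s) + Dt (x, s)) (at 0)"
proof -
  define P where "P = (\<lambda>w::real \<times> real. ((\<lambda>l. x l + fst w * sdir j l), s + snd w))"
  define W where "W = {w. P w \<in> U}"
  have "x \<in> aff_simplex q"
    using openin_prod_subtopology_powertop(1)[OF U] xs by auto
  then have P_aff: "P w \<in> aff_simplex q \<times> UNIV" for w
    using sdir_in_aff_simplex[OF _ j] by (simp add: P_def)
  have contP: "continuous_map euclidean (prod_topology (powertop_real UNIV) euclideanreal) P"
    unfolding continuous_map_pairwise continuous_map_componentwise_UNIV
    by (auto simp: P_def o_def intro!: continuous_intros)
  have "openin euclidean {w \<in> topspace euclidean. P w \<in> U}"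
    using contP P_aff
    by (intro openin_continuous_map_preimage[OF _ openin_prod_subtopology_powertop(2)[OF U]])
       (auto simp: continuous_map_in_subtopology)
  then have "open W"
    by (simp add: W_def)
  have contDtP: "continuous_on W (Dt \<circ> P)"
  proof -
    have "continuous_map (top_of_set W) (subtopology (prod_topology (powertop_real UNIV) euclideanreal) U) P"
      using contP by (auto simp: W_def continuous_map_in_subtopology intro: continuous_map_from_subtopology)
    then have "continuous_map (top_of_set W) euclidean (Dt \<circ> P)"
      using cDt by (rule continuous_map_compose)
    then show ?thesis
      by simp
  qed
  have "((\<lambda>t. F (P (t, t))) has_vector_derivative D (x, s) + (Dt \<circ> P) (0, 0)) (at 0)"
  proof (rule has_vector_derivative_diagonal[where f = "\<lambda>u v. F (P (u, v))", OF \<open>open W\<close> _ _ _ contDtP])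
    show "(0, 0) \<in> W"
      using xs by (simp add: W_def P_def)
    show "((\<lambda>u. F (P (u, 0))) has_vector_derivative D (x, s)) (at 0)"
      using Dj[OF xs] by (simp add: P_def)
    fix u v assume "(u, v) \<in> W"
    then have "((\<lambda>\<tau>. F (P (u, v + \<tau>))) has_vector_derivative Dt (P (u, v))) (at 0)"
      using Dt[of "\<lambda>l. x l + u * sdir j l" "s + v"] by (simp add: W_def P_def add.assoc)
    then show "((\<lambda>v. F (P (u, v))) has_vector_derivative (Dt \<circ> P) (u, v)) (at v)"
      by (simp add: has_vector_derivative_at_shift)
  qed
  then show ?thesis
    by (simp add: P_def)
qed

lemma smooth_prismE:
  assumes "smooth_prism i H"
  obtains U F D Dt where
    "openin (prod_topology (subtopology (powertop_real UNIV) (aff_simplex i)) euclideanreal) U"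
    "standard_simplex i \<times> {0..1} \<subseteq> U" "\<And>p. p \<in> standard_simplex i \<times> {0..1} \<Longrightarrow> F p = H p"
    "\<And>j x s. j \<in> {1..i} \<Longrightarrow> (x, s) \<in> U \<Longrightarrow>
       ((\<lambda>t. F (\<lambda>l. x l + t * sdir j l, s)) has_vector_derivative D j (x, s)) (at 0)"
    "\<And>x s. (x, s) \<in> U \<Longrightarrow> ((\<lambda>t. F (x, s + t)) has_vector_derivative Dt (x, s)) (at 0)"
    "\<And>j. j \<in> {1..i} \<Longrightarrow> continuous_map (subtopology (prod_topology (powertop_real UNIV) euclideanreal) U) euclidean (D j)"
    "continuous_map (subtopology (prod_topology (powertop_real UNIV) euclideanreal) U) euclidean Dt"
proof -
  obtain U F D Dt where
    "openin (prod_topology (subtopology (powertop_real UNIV) (aff_simplex i)) euclideanreal) U"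
    "standard_simplex i \<times> {0..1} \<subseteq> U" "\<forall>p\<in>standard_simplex i \<times> {0..1}. F p = H p"
    "\<forall>j\<in>{1..i}. \<forall>x s. (x, s) \<in> U \<longrightarrow>
       ((\<lambda>t. F (\<lambda>l. x l + t * sdir j l, s)) has_vector_derivative D j (x, s)) (at 0)"
    "\<forall>x s. (x, s) \<in> U \<longrightarrow> ((\<lambda>t. F (x, s + t)) has_vector_derivative Dt (x, s)) (at 0)"
    "\<forall>j\<in>{1..i}. continuous_map (subtopology (prod_topology (powertop_real UNIV) euclideanreal) U) euclidean (D j)"
    "continuous_map (subtopology (prod_topology (powertop_real UNIV) euclideanreal) U) euclidean Dt"
    using assms unfolding smooth_prism_def by (elim exE conjE) (rule that; assumption)
  then show ?thesis
    by (intro that[of U F D Dt]) auto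
qed

lemma standard_simplex_subset_aff_simplex: "standard_simplex n \<subseteq> aff_simplex n"
  by (auto simp: standard_simplex_def aff_simplex_def)

lemma smooth_simplex_slice:
  assumes "smooth_prism i H" "m \<in> {0..1}"
  shows "smooth_simplex i (restrict (\<lambda>x. H (x, m)) (standard_simplex i))"
proof -
  obtain U F D Dt where U: "openin (prod_topology (subtopology (powertop_real UNIV) (aff_simplex i)) euclideanreal) U"
    and "standard_simplex i \<times> {0..1} \<subseteq> U" and "\<And>p. p \<in> standard_simplex i \<times> {0..1} \<Longrightarrow> F p = H p"
    and D: "\<And>j x s. j \<in> {1..i} \<Longrightarrow> (x, s) \<in> U \<Longrightarrow>
       ((\<lambda>t. F (\<lambda>l. x l + t * sdir j l, s)) has_vector_derivative D j (x, s)) (at 0)"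
    and "\<And>x s. (x, s) \<in> U \<Longrightarrow> ((\<lambda>t. F (x, s + t)) has_vector_derivative Dt (x, s)) (at 0)"
    and cD: "\<And>j. j \<in> {1..i} \<Longrightarrow> continuous_map (subtopology (prod_topology (powertop_real UNIV) euclideanreal) U) euclidean (D j)"
    and "continuous_map (subtopology (prod_topology (powertop_real UNIV) euclideanreal) U) euclidean Dt"
    using assms(1) by (elim smooth_prismE) (rule that; assumption)
  define U' where "U' = {x \<in> aff_simplex i. (x, m) \<in> U}"
  have "continuous_map (subtopology (powertop_real UNIV) (aff_simplex i))
          (prod_topology (subtopology (powertop_real UNIV) (aff_simplex i)) euclideanreal) (\<lambda>x. (x, m))"
    by (simp add: continuous_map_pairwise o_def)
  from openin_continuous_map_preimage[OF this U]
  have "openin (subtopology (powertop_real UNIV) (aff_simplex i)) U'"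
    by (simp add: U'_def)
  moreover have "continuous_map (subtopology (powertop_real UNIV) U') (subtopology (prod_topology (powertop_real UNIV) euclideanreal) U) (\<lambda>x. (x, m))"
    by (auto simp: continuous_map_in_subtopology continuous_map_pairwise o_def U'_def intro: continuous_map_from_subtopology)
  then have "continuous_map (subtopology (powertop_real UNIV) U') euclidean (\<lambda>x. D j (x, m))" if "j \<in> {1..i}" for j
    using continuous_map_compose[OF _ cD[OF that]] by (simp add: o_def)
  ultimately show ?thesis
    unfolding smooth_simplex_def
    using assms(2) standard_simplex_subset_aff_simplex \<open>standard_simplex i \<times> {0..1} \<subseteq> U\<close>
      \<open>\<And>p. p \<in> standard_simplex i \<times> {0..1} \<Longrightarrow> F p = H p\<close> D
    by (intro exI[of _ U'] exI[of _ "\<lambda>x. F (x, m)"] exI[of _ "\<lambda>j x. D j (x, m)"] conjI ballI)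
       (auto simp: U'_def)
qed

text \<open>The affine extension of \<open>prism_simplex q i\<close> to the whole affine span, in \<open>(x, t)\<close> coordinates.\<close>

definition prism_affine :: "nat \<Rightarrow> nat \<Rightarrow> (nat \<Rightarrow> real) \<Rightarrow> (nat \<Rightarrow> real) \<times> real" where
  "prism_affine q i z =
     ((\<lambda>l. \<Sum>j\<le>Suc q. prism_vertex i j (Suc l) * z j), \<Sum>j\<le>Suc q. prism_vertex i j 0 * z j)"

lemma prism_affine_eq:
  "z \<in> standard_simplex (Suc q) \<Longrightarrow> prism_affine q i z = (prism_simplex q i z \<circ> Suc, prism_simplex q i z 0)"
  by (simp add: prism_affine_def prism_simplex_def oriented_simplex_def o_def mult.commute)

lemma continuous_map_prism_affine:
  "continuous_map (powertop_real UNIV) (prod_topology (powertop_real UNIV) euclideanreal) (prism_affine q i)"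
  unfolding continuous_map_pairwise continuous_map_componentwise_UNIV prism_affine_def o_def
  by (auto simp del: sum.atMost_Suc
      intro!: continuous_map_sum continuous_map_real_mult_left continuous_map_product_projection)

lemma prism_affine_in_aff_simplex:
  assumes "i \<le> q" "z \<in> aff_simplex (Suc q)"
  shows "prism_affine q i z \<in> aff_simplex q \<times> UNIV"
proof -
  have col: "(\<Sum>l\<le>q. prism_vertex i j (Suc l)) = 1" if "j \<le> Suc q" for j
  proof -
    have "(\<Sum>l\<le>q. prism_vertex i j (Suc l)) = (\<Sum>l\<le>q. if l = (if j \<le> i then j else j - 1) then 1 else 0)"
      by (intro sum.cong) (auto simp: prism_vertex_def lift_vertex_def)
    then show ?thesis
      using that assms(1) by auto
  qed
  have "(\<Sum>l\<le>q. fst (prism_affine q i z) l) = (\<Sum>j\<le>Suc q. z j * (\<Sum>l\<le>q. prism_vertex i j (Suc l)))"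
    by (simp add: prism_affine_def sum_distrib_left mult.commute del: sum.atMost_Suc) (rule sum.swap)
  also have "\<dots> = 1"
    using assms(2) col by (simp add: aff_simplex_def)
  moreover have "fst (prism_affine q i z) l = 0" if "q < l" for l
    using that assms(1) by (auto simp: prism_affine_def prism_vertex_def lift_vertex_def intro!: sum.neutral)
  ultimately show ?thesis
    by (auto simp: aff_simplex_def mem_Times_iff)
qed

lemma prism_affine_sdir:
  assumes "1 \<le> j" "j \<le> Suc q"
  shows "prism_affine q i (\<lambda>l. z l + t * sdir j l) =
    ((\<lambda>l. fst (prism_affine q i z) l + t * (if j \<le> i then sdir j l else if j = 1 then 0 else sdir (j - 1) l)),
     snd (prism_affine q i z) + t * (if j \<le> i then 0 else 1))"
proof -
  have sum: "(\<Sum>j'\<le>Suc q. prism_vertex i j' n * (z j' + t * sdir j j')) =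
               (\<Sum>j'\<le>Suc q. prism_vertex i j' n * z j') + t * (prism_vertex i j n - prism_vertex i 0 n)" for n
  proof -
    have "(\<Sum>j'\<le>Suc q. prism_vertex i j' n * sdir j j') =
            (\<Sum>j'\<le>Suc q. (if j' = j then prism_vertex i j' n else 0) - (if j' = 0 then prism_vertex i j' n else 0))"
      using assms by (intro sum.cong) (auto simp: sdir_def)
    then have "(\<Sum>j'\<le>Suc q. prism_vertex i j' n * sdir j j') = prism_vertex i j n - prism_vertex i 0 n"
      using assms by (simp add: sum_subtractf)
    moreover have "(\<Sum>j'\<le>Suc q. prism_vertex i j' n * (z j' + t * sdir j j')) =
        (\<Sum>j'\<le>Suc q. prism_vertex i j' n * z j') + t * (\<Sum>j'\<le>Suc q. prism_vertex i j' n * sdir j j')"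
      by (simp add: distrib_left sum.distrib sum_distrib_left mult.left_commute del: sum.atMost_Suc)
    ultimately show ?thesis
      by simp
  qed
  have "prism_vertex i j (Suc l) - prism_vertex i 0 (Suc l) =
          (if j \<le> i then sdir j l else if j = 1 then 0 else sdir (j - 1) l)" for l
    using assms by (auto simp: prism_vertex_def lift_vertex_def sdir_def)
  moreover have "prism_vertex i j 0 - prism_vertex i 0 0 = (if j \<le> i then 0 else 1)"
    using assms by (auto simp: prism_vertex_def lift_vertex_def)
  ultimately show ?thesis
    unfolding prism_affine_def fst_conv snd_conv sum by simp
qed

text \<open>\<open>prism_affine q i\<close> maps the edge direction \<open>sdir j\<close> to \<open>(sdir j, 0)\<close>, \<open>(0, 1)\<close> or \<open>(sdir (j - 1), 1)\<close>;
  this is the corresponding derivative of \<open>F \<circ> prism_affine q i\<close> in terms of the partials of \<open>F\<close>.\<close>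

definition prism_affine_derivative ::
  "nat \<Rightarrow> (nat \<Rightarrow> 'w \<Rightarrow> 'b::real_normed_vector) \<Rightarrow> ('w \<Rightarrow> 'b) \<Rightarrow> nat \<Rightarrow> 'w \<Rightarrow> 'b" where
  "prism_affine_derivative i D Dt j w = (if j \<le> i then D j w else if j = 1 then Dt w else D (j - 1) w + Dt w)"

lemma continuous_map_prism_affine_derivative:
  assumes "\<And>j. j \<in> {1..q} \<Longrightarrow> continuous_map X euclidean (D j)" "continuous_map X euclidean Dt"
    and "i \<le> q" "j \<in> {1..Suc q}"
  shows "continuous_map X euclidean (prism_affine_derivative i D Dt j)"
proof -
  consider "j \<le> i" | "\<not> j \<le> i" "j = 1" | "\<not> j \<le> i" "j - 1 \<in> {1..q}"
    using assms(4) by fastforce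
  then show ?thesis
    by cases (use assms in \<open>auto simp: prism_affine_derivative_def[abs_def] intro!: continuous_map_add\<close>)
qed

lemma prism_affine_directional_derivative:
  fixes F :: "(nat \<Rightarrow> real) \<times> real \<Rightarrow> 'b::real_normed_vector"
  assumes U: "openin (prod_topology (subtopology (powertop_real UNIV) (aff_simplex q)) euclideanreal) U"
    and Dj: "\<And>j x s. j \<in> {1..q} \<Longrightarrow> (x, s) \<in> U \<Longrightarrow>
               ((\<lambda>t. F (\<lambda>l. x l + t * sdir j l, s)) has_vector_derivative D j (x, s)) (at 0)"
    and Dt: "\<And>x s. (x, s) \<in> U \<Longrightarrow> ((\<lambda>t. F (x, s + t)) has_vector_derivative Dt (x, s)) (at 0)"
    and cDt: "continuous_map (subtopology (prod_topology (powertop_real UNIV) euclideanreal) U) euclidean Dt"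
    and "i \<le> q" "j \<in> {1..Suc q}" and z: "prism_affine q i z \<in> U"
  shows "((\<lambda>t. F (prism_affine q i (\<lambda>l. z l + t * sdir j l))) has_vector_derivative
           prism_affine_derivative i D Dt j (prism_affine q i z)) (at 0)"
proof -
  obtain x s where xs: "prism_affine q i z = (x, s)"
    by fastforce
  have "(x, s) \<in> U"
    using z xs by simp
  consider "j \<le> i" | "\<not> j \<le> i" "j = 1" | "\<not> j \<le> i" "j \<noteq> 1"
    by blast
  then show ?thesis
  proof cases
    case 1
    then show ?thesis
      using Dj[of j x s] \<open>(x, s) \<in> U\<close> \<open>i \<le> q\<close> \<open>j \<in> {1..Suc q}\<close>
      by (simp add: prism_affine_sdir xs prism_affine_derivative_def)
  next
    case 2
    then show ?thesis
      using Dt \<open>(x, s) \<in> U\<close> \<open>j \<in> {1..Suc q}\<close> by (simp add: prism_affine_sdir xs prism_affine_derivative_def)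
  next
    case 3
    then have "1 \<le> j - 1" "j - 1 \<le> q"
      using \<open>j \<in> {1..Suc q}\<close> by auto
    with U Dj Dt cDt \<open>(x, s) \<in> U\<close>
    have "((\<lambda>t. F (\<lambda>l. x l + t * sdir (j - 1) l, s + t)) has_vector_derivative D (j - 1) (x, s) + Dt (x, s)) (at 0)"
      by (intro smooth_prism_diagonal_derivative[where q = q]) auto
    then show ?thesis
      using 3 \<open>j \<in> {1..Suc q}\<close> by (simp add: prism_affine_sdir xs prism_affine_derivative_def)
  qed
qed

lemma smooth_simplex_prism_piece:
  assumes "smooth_prism q H" "i \<le> q"
  shows "smooth_simplex (Suc q) (prism_piece q H i)"
proof -
  obtain U F D Dt where U: "openin (prod_topology (subtopology (powertop_real UNIV) (aff_simplex q)) euclideanreal) U"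
    and prism: "standard_simplex q \<times> {0..1} \<subseteq> U" and F: "\<And>p. p \<in> standard_simplex q \<times> {0..1} \<Longrightarrow> F p = H p"
    and Dj: "\<And>j x s. j \<in> {1..q} \<Longrightarrow> (x, s) \<in> U \<Longrightarrow>
       ((\<lambda>t. F (\<lambda>l. x l + t * sdir j l, s)) has_vector_derivative D j (x, s)) (at 0)"
    and Dt: "\<And>x s. (x, s) \<in> U \<Longrightarrow> ((\<lambda>t. F (x, s + t)) has_vector_derivative Dt (x, s)) (at 0)"
    and cD: "\<And>j. j \<in> {1..q} \<Longrightarrow> continuous_map (subtopology (prod_topology (powertop_real UNIV) euclideanreal) U) euclidean (D j)"
    and cDt: "continuous_map (subtopology (prod_topology (powertop_real UNIV) euclideanreal) U) euclidean Dt"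
    using assms(1) by (elim smooth_prismE) (rule that; assumption)
  define A where "A = prism_affine q i"
  define U' where "U' = {z \<in> aff_simplex (Suc q). A z \<in> U}"
  define D' where "D' = (\<lambda>j z. prism_affine_derivative i D Dt j (A z))"
  have "continuous_map (subtopology (powertop_real UNIV) (aff_simplex (Suc q)))
          (subtopology (prod_topology (powertop_real UNIV) euclideanreal) (aff_simplex q \<times> UNIV)) A"
    using continuous_map_prism_affine prism_affine_in_aff_simplex[OF assms(2)]
    by (auto simp: A_def continuous_map_in_subtopology intro: continuous_map_from_subtopology)
  then have "continuous_map (subtopology (powertop_real UNIV) (aff_simplex (Suc q)))
          (prod_topology (subtopology (powertop_real UNIV) (aff_simplex q)) euclideanreal) A"
    by (simp add: subtopology_Times)
  from openin_continuous_map_preimage[OF this U]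
  have "openin (subtopology (powertop_real UNIV) (aff_simplex (Suc q))) U'"
    by (simp add: U'_def)
  moreover have "standard_simplex (Suc q) \<subseteq> U'"
    using prism_simplex_in_prism[OF assms(2)] prism standard_simplex_subset_aff_simplex
    by (force simp: U'_def A_def prism_affine_eq)
  moreover have "F (A z) = prism_piece q H i z" if "z \<in> standard_simplex (Suc q)" for z
    using F prism_simplex_in_prism[OF assms(2) that] that
    by (simp add: A_def prism_affine_eq prism_piece_def simplex_map_def)
  moreover have "((\<lambda>t. F (A (\<lambda>l. z l + t * sdir j l))) has_vector_derivative D' j z) (at 0)"
    if "j \<in> {1..Suc q}" "z \<in> U'" for j z
    unfolding A_def D'_def
    by (rule prism_affine_directional_derivative[OF U Dj Dt cDt assms(2) that(1)]) (use that in \<open>simp_all add: U'_def A_def\<close>)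
  moreover have "continuous_map (subtopology (powertop_real UNIV) U') euclidean (D' j)" if "j \<in> {1..Suc q}" for j
  proof -
    have "continuous_map (subtopology (powertop_real UNIV) U') (subtopology (prod_topology (powertop_real UNIV) euclideanreal) U) A"
      using continuous_map_prism_affine
      by (auto simp: A_def U'_def continuous_map_in_subtopology intro: continuous_map_from_subtopology)
    then show ?thesis
      using continuous_map_compose continuous_map_prism_affine_derivative[OF cD cDt assms(2) that]
      by (fastforce simp: D'_def o_def)
  qed
  ultimately show ?thesis
    unfolding smooth_simplex_def
    by (intro exI[of _ U'] exI[of _ "F \<circ> A"] exI[of _ D'] conjI ballI) auto
qed

section \<open>The chain homotopy\<close>

lemma sum_abs_lookup_frag_of:
  assumes "finite F"
  shows "(\<Sum>\<tau>\<in>F. \<bar>of_int (Poly_Mapping.lookup (frag_of \<sigma>) \<tau>) :: real\<bar>) \<le> 1"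
proof -
  have "(\<Sum>\<tau>\<in>F. \<bar>of_int (Poly_Mapping.lookup (frag_of \<sigma>) \<tau>) :: real\<bar>) = (\<Sum>\<tau>\<in>F. if \<tau> = \<sigma> then 1 else 0)"
    by (intro sum.cong) auto
  also have "\<dots> \<le> 1"
    by (simp add: sum.delta[OF assms])
  finally show ?thesis .
qed

lemma sum_abs_lookup_prism_chain:
  assumes "finite F"
  shows "(\<Sum>\<tau>\<in>F. \<bar>of_int (Poly_Mapping.lookup (prism_chain q H) \<tau>) :: real\<bar>) \<le> real q + 1"
proof -
  have "(\<Sum>\<tau>\<in>F. \<bar>of_int (Poly_Mapping.lookup (prism_chain q H) \<tau>) :: real\<bar>) \<le>
          (\<Sum>\<tau>\<in>F. \<Sum>i\<le>q. if \<tau> = prism_piece q H i then 1 else 0)"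
  proof (rule sum_mono)
    fix \<tau>
    have "\<bar>of_int (Poly_Mapping.lookup (prism_chain q H) \<tau>) :: real\<bar> =
            \<bar>\<Sum>i\<le>q. (-1) ^ i * (if \<tau> = prism_piece q H i then 1 else 0) :: real\<bar>"
      by (simp add: prism_chain_def lookup_sum of_int_sum if_distrib[of real_of_int] cong: if_cong)
    also have "\<dots> \<le> (\<Sum>i\<le>q. if \<tau> = prism_piece q H i then 1 else 0)"
      by (rule order_trans[OF sum_abs]) (simp add: abs_mult)
    finally show "\<bar>of_int (Poly_Mapping.lookup (prism_chain q H) \<tau>) :: real\<bar> \<le>
                    (\<Sum>i\<le>q. if \<tau> = prism_piece q H i then 1 else 0)" .
  qed
  also have "\<dots> = (\<Sum>i\<le>q. \<Sum>\<tau>\<in>F. if \<tau> = prism_piece q H i then 1 else 0)"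
    by (rule sum.swap)
  also have "\<dots> \<le> (\<Sum>i\<le>q. 1)"
    by (intro sum_mono) (simp add: sum.delta[OF assms])
  finally show ?thesis
    by simp
qed

lemma lf_lip_chain_coeff_extend:
  assumes lb: "lip_bounded M d h" and lf: "preserves_local_finiteness M d h"
    and c: "in_chains M d kind sm i c" and "kind \<noteq> Kfin"
    and image: "\<And>\<sigma> \<tau>. \<tau> \<in> Poly_Mapping.keys (\<Phi> \<sigma>) \<Longrightarrow> \<tau> ` standard_simplex j \<subseteq> prism_image h i \<sigma>"
    and lip: "\<And>\<sigma> \<tau> L. lip_prism_L M d i (h i \<sigma>) L \<Longrightarrow> 0 \<le> L \<Longrightarrow> \<tau> \<in> Poly_Mapping.keys (\<Phi> \<sigma>) \<Longrightarrow>
                lip_simplex_L M d j \<tau> (C * L)"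
  shows "lf_lip_chain M d j (coeff_extend \<Phi> c)"
proof -
  have "lf_lip_chain M d i c"
    using c \<open>kind \<noteq> Kfin\<close> by (simp add: in_chains_def)
  then obtain L where "0 \<le> L" and L: "\<And>\<sigma>. c \<sigma> \<noteq> 0 \<Longrightarrow> lip_prism_L M d i (h i \<sigma>) L"
    using lip_prism_L_uniform[OF lb] by blast
  show ?thesis
    unfolding lf_lip_chain_def
  proof (intro conjI allI impI exI ballI)
    fix \<tau> assume "\<tau> \<in> csupp (coeff_extend \<Phi> c)"
    then obtain \<sigma> where "c \<sigma> \<noteq> 0" "\<tau> \<in> Poly_Mapping.keys (\<Phi> \<sigma>)"
      using csupp_coeff_extend by (fastforce simp: csupp_def)
    then show "lip_simplex_L M d j \<tau> (C * L)"
      using lip L \<open>0 \<le> L\<close> by blast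
  next
    fix K assume K: "compactin (Metric_space.mtopology M d) K"
    let ?S = "{\<sigma>. c \<sigma> \<noteq> 0 \<and> prism_image h i \<sigma> \<inter> K \<noteq> {}}"
    have "{\<tau> \<in> csupp (coeff_extend \<Phi> c). \<tau> ` standard_simplex j \<inter> K \<noteq> {}} \<subseteq> (\<Union>\<sigma>\<in>?S. Poly_Mapping.keys (\<Phi> \<sigma>))"
    proof
      fix \<tau> assume "\<tau> \<in> {\<tau> \<in> csupp (coeff_extend \<Phi> c). \<tau> ` standard_simplex j \<inter> K \<noteq> {}}"
      then obtain \<sigma> where \<sigma>: "c \<sigma> \<noteq> 0" "\<tau> \<in> Poly_Mapping.keys (\<Phi> \<sigma>)" and "\<tau> ` standard_simplex j \<inter> K \<noteq> {}"
        using csupp_coeff_extend by (fastforce simp: csupp_def)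
      with image[OF \<sigma>(2)] show "\<tau> \<in> (\<Union>\<sigma>\<in>?S. Poly_Mapping.keys (\<Phi> \<sigma>))"
        by blast
    qed
    moreover have "finite ?S"
      by (rule finite_prism_images_meeting_compact[OF lf c \<open>kind \<noteq> Kfin\<close> K])
    then have "finite (\<Union>\<sigma>\<in>?S. Poly_Mapping.keys (\<Phi> \<sigma>))"
      by simp
    ultimately show "finite {\<tau> \<in> csupp (coeff_extend \<Phi> c). \<tau> ` standard_simplex j \<inter> K \<noteq> {}}"
      by (rule finite_subset)
  qed
qed

lemma in_chains_coeff_extend:
  assumes ms: "Metric_space M d" and hl: "h_lipschitz M d h"
    and kind: "kind = Kfin \<or> lip_bounded M d h \<and> preserves_local_finiteness M d h"
    and c: "in_chains M d kind sm i c"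
    and image: "\<And>\<sigma> \<tau>. \<tau> \<in> Poly_Mapping.keys (\<Phi> \<sigma>) \<Longrightarrow> \<tau> ` standard_simplex j \<subseteq> prism_image h i \<sigma>"
    and lip: "\<And>\<sigma> \<tau> L. lip_prism_L M d i (h i \<sigma>) L \<Longrightarrow> 0 \<le> L \<Longrightarrow> \<tau> \<in> Poly_Mapping.keys (\<Phi> \<sigma>) \<Longrightarrow>
                lip_simplex_L M d j \<tau> (C * L)"
    and smooth: "\<And>\<sigma> \<tau>. sm \<Longrightarrow> lip_simplex M d i \<sigma> \<Longrightarrow> smooth_simplex i \<sigma> \<Longrightarrow>
                   \<tau> \<in> Poly_Mapping.keys (\<Phi> \<sigma>) \<Longrightarrow> smooth_simplex j \<tau>"
    and bound: "\<And>\<sigma> F. finite F \<Longrightarrow> (\<Sum>\<tau>\<in>F. \<bar>of_int (Poly_Mapping.lookup (\<Phi> \<sigma>) \<tau>)\<bar>) \<le> (B::real)"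
  shows "in_chains M d kind sm j (coeff_extend \<Phi> c)"
  unfolding in_chains_def
proof (intro conjI impI ballI)
  fix \<tau> assume "\<tau> \<in> csupp (coeff_extend \<Phi> c)"
  then obtain \<sigma> where \<sigma>: "c \<sigma> \<noteq> 0" "\<tau> \<in> Poly_Mapping.keys (\<Phi> \<sigma>)"
    using csupp_coeff_extend by (fastforce simp: csupp_def)
  then have source: "lip_simplex M d i \<sigma>" "sm \<Longrightarrow> smooth_simplex i \<sigma>"
    using c by (auto simp: in_chains_def csupp_def)
  obtain L where "0 \<le> L" "lip_prism_L M d i (h i \<sigma>) L"
    using lip_prism_L_nonneg[OF hl source(1)] .
  then show "lip_simplex M d j \<tau>"
    using lip \<sigma>(2) unfolding lip_simplex_def by blast
  show "smooth_simplex j \<tau>" if sm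
    by (rule smooth[OF that source(1) source(2)[OF that] \<sigma>(2)])
next
  assume "kind = Kfin"
  then have "finite (\<Union>\<sigma>\<in>csupp c. Poly_Mapping.keys (\<Phi> \<sigma>))"
    using c by (simp add: in_chains_def)
  with csupp_coeff_extend show "finite (csupp (coeff_extend \<Phi> c))"
    by (rule finite_subset)
next
  assume "kind \<noteq> Kfin"
  with kind c image lip show "lf_lip_chain M d j (coeff_extend \<Phi> c)"
    by (intro lf_lip_chain_coeff_extend) auto
next
  assume "kind = Klfl1"
  then have "(\<lambda>\<sigma>. \<bar>c \<sigma>\<bar>) summable_on UNIV"
    using c by (simp add: in_chains_def)
  moreover have "finite {\<sigma>. c \<sigma> \<noteq> 0 \<and> \<tau> \<in> Poly_Mapping.keys (\<Phi> \<sigma>)}" for \<tau>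
  proof -
    have "point_finite c (prism_image h i)"
      using kind by (intro point_finite_prism_images[OF ms hl c]) auto
    then have "finite {\<sigma>. c \<sigma> \<noteq> 0 \<and> \<tau> ` standard_simplex j \<subseteq> prism_image h i \<sigma>}"
      by (rule point_finite_image_subset)
    then show ?thesis
      by (rule finite_subset[rotated]) (auto dest: image)
  qed
  ultimately show "(\<lambda>\<tau>. \<bar>coeff_extend \<Phi> c \<tau>\<bar>) summable_on UNIV"
    using bound by (rule coeff_extend_summable_abs)
qed

lemma in_chains_push:
  assumes ms: "Metric_space M d" and hl: "h_lipschitz M d h"
    and kind: "kind = Kfin \<or> lip_bounded M d h \<and> preserves_local_finiteness M d h"
    and smooth: "sm \<Longrightarrow> preserves_smoothness M d h"
    and c: "in_chains M d kind sm i c" and m: "m \<in> {0, 1}"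
  shows "in_chains M d kind sm i (push h m i c)"
  unfolding push_eq_coeff_extend
proof (rule in_chains_coeff_extend[OF ms hl kind c, where C = 1 and B = 1])
  fix \<sigma> \<tau> assume "\<tau> \<in> Poly_Mapping.keys (frag_of (fmap h m i \<sigma>))"
  then have \<tau>: "\<tau> = fmap h m i \<sigma>"
    by simp
  show "\<tau> ` standard_simplex i \<subseteq> prism_image h i \<sigma>"
    using m by (auto simp: \<tau> fmap_def prism_image_def)
  show "lip_simplex_L M d i \<tau> (1 * L)" if "lip_prism_L M d i (h i \<sigma>) L" for L
    using lip_simplex_L_slice[OF that, of m] m by (auto simp: \<tau> fmap_def)
  show "smooth_simplex i \<tau>" if sm "lip_simplex M d i \<sigma>" "smooth_simplex i \<sigma>"
  proof -
    have "smooth_prism i (h i \<sigma>)"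
      using smooth that by (simp add: preserves_smoothness_def)
    then show ?thesis
      using smooth_simplex_slice[of i "h i \<sigma>" m] m by (auto simp: \<tau> fmap_def)
  qed
qed (rule sum_abs_lookup_frag_of)

lemma in_chains_prism_operator:
  assumes ms: "Metric_space M d" and hl: "h_lipschitz M d h"
    and kind: "kind = Kfin \<or> lip_bounded M d h \<and> preserves_local_finiteness M d h"
    and smooth: "sm \<Longrightarrow> preserves_smoothness M d h"
    and c: "in_chains M d kind sm i c"
  shows "in_chains M d kind sm (Suc i) (prism_operator h i c)"
  unfolding prism_operator_def
proof (rule in_chains_coeff_extend[OF ms hl kind c, where C = "(real i + 2)\<^sup>2" and B = "real i + 1"])
  fix \<sigma> \<tau> assume "\<tau> \<in> Poly_Mapping.keys (prism_chain i (h i \<sigma>))"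
  then obtain k where k: "k \<le> i" "\<tau> = prism_piece i (h i \<sigma>) k"
    by (elim keys_prism_chain)
  show "\<tau> ` standard_simplex (Suc i) \<subseteq> prism_image h i \<sigma>"
    using prism_piece_image[OF k(1)] by (simp add: k(2) prism_image_def)
  show "lip_simplex_L M d (Suc i) \<tau> ((real i + 2)\<^sup>2 * L)"
    if "lip_prism_L M d i (h i \<sigma>) L" "0 \<le> L" for L
    using lip_simplex_L_prism_piece[OF that k(1)] by (simp add: k(2))
  show "smooth_simplex (Suc i) \<tau>" if sm "lip_simplex M d i \<sigma>" "smooth_simplex i \<sigma>"
  proof -
    have "smooth_prism i (h i \<sigma>)"
      using smooth that by (simp add: preserves_smoothness_def)
    then show ?thesis
      using smooth_simplex_prism_piece[OF _ k(1)] by (simp add: k(2))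
  qed
qed (rule sum_abs_lookup_prism_chain)

lemma prism_operator_linear:
  assumes "point_finite c (prism_image h i)" "point_finite c' (prism_image h i)"
  shows "prism_operator h i (\<lambda>\<sigma>. a * c \<sigma> + b * c' \<sigma>) =
           (\<lambda>\<sigma>. a * prism_operator h i c \<sigma> + b * prism_operator h i c' \<sigma>)"
proof
  fix \<tau>
  let ?S = "\<lambda>c. {\<sigma>. c \<sigma> \<noteq> 0 \<and> \<tau> ` standard_simplex (Suc i) \<subseteq> prism_image h i \<sigma>}"
  have "finite (?S c \<union> ?S c')"
    using assms by (intro finite_UnI point_finite_image_subset)
  then show "prism_operator h i (\<lambda>\<sigma>. a * c \<sigma> + b * c' \<sigma>) \<tau> =
               a * prism_operator h i c \<tau> + b * prism_operator h i c' \<tau>"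
    unfolding prism_operator_def
  proof (rule coeff_extend_linear)
    fix \<sigma> assume "c \<sigma> \<noteq> 0 \<or> c' \<sigma> \<noteq> 0" and \<tau>: "\<tau> \<in> Poly_Mapping.keys (prism_chain i (h i \<sigma>))"
    moreover have "\<tau> ` standard_simplex (Suc i) \<subseteq> prism_image h i \<sigma>"
      using keys_prism_chain_image[OF \<tau>] by (simp add: prism_image_def)
    ultimately show "\<sigma> \<in> ?S c \<union> ?S c'"
      by auto
  qed
qed

lemma homotopy_conclusionI:
  assumes ms: "Metric_space M d" and hl: "h_lipschitz M d h" and fc: "face_compatible M d h"
    and kind: "kind = Kfin \<or> lip_bounded M d h \<and> preserves_local_finiteness M d h"
    and smooth: "sm \<Longrightarrow> preserves_smoothness M d h"
  shows "homotopy_conclusion M d h kind sm"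
proof -
  have prisms: "point_finite c (prism_image h i)" if "in_chains M d kind sm i c" for i c
    using kind by (auto intro: point_finite_prism_images[OF ms hl that])
  have compatible: "h (i - 1) (singular_face i k \<sigma>) (x, t) = h i \<sigma> (simplical_face k x, t)"
    if "in_chains M d kind sm i c" "c \<sigma> \<noteq> 0" "0 < i" "k \<le> i" "x \<in> standard_simplex (i - 1)" "t \<in> {0..1}"
    for i c \<sigma> k x t
    using that fc by (auto simp: face_compatible_def in_chains_def csupp_def)
  show ?thesis
    unfolding homotopy_conclusion_def chain_homotopic_in_def
    using in_chains_push[OF ms hl kind smooth] in_chains_prism_operator[OF ms hl kind smooth]
      prism_operator_linear[OF prisms prisms]
      prism_operator_homotopy[OF compatible point_finite_simplices[OF ms] prisms]
    by (intro conjI exI[of _ "prism_operator h"]) (auto simp: fun_eq_iff)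
qed

theorem lemma3p10:
  fixes M :: "'a::euclidean_space set" and d :: "'a \<Rightarrow> 'a \<Rightarrow> real"
    and h :: "nat \<Rightarrow> ((nat \<Rightarrow> real) \<Rightarrow> 'a) \<Rightarrow> (nat \<Rightarrow> real) \<times> real \<Rightarrow> 'a"
  assumes "Metric_space M d"
    and "h_lipschitz M d h"
  shows "(face_compatible M d h \<longrightarrow> homotopy_conclusion M d h Kfin False)
       \<and> (face_compatible M d h \<and> lip_bounded M d h \<and> preserves_local_finiteness M d h \<longrightarrow>
            homotopy_conclusion M d h Klf False \<and> homotopy_conclusion M d h Klfl1 False)
       \<and> (face_compatible M d h \<and> preserves_smoothness M d h \<longrightarrow>
            homotopy_conclusion M d h Kfin True)
       \<and> (face_compatible M d h \<and> lip_bounded M d h \<and> preserves_local_finiteness M d h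
            \<and> preserves_smoothness M d h \<longrightarrow>
            homotopy_conclusion M d h Klf True \<and> homotopy_conclusion M d h Klfl1 True)"
proof (intro conjI impI)
  note conclusion = homotopy_conclusionI[OF assms]
  show "homotopy_conclusion M d h Kfin False" if "face_compatible M d h"
    by (rule conclusion[OF that]) simp_all
  show "homotopy_conclusion M d h Klf False" "homotopy_conclusion M d h Klfl1 False"
    if "face_compatible M d h \<and> lip_bounded M d h \<and> preserves_local_finiteness M d h"
    using that by (auto intro: conclusion)
  show "homotopy_conclusion M d h Kfin True" if "face_compatible M d h \<and> preserves_smoothness M d h"
    using that by (auto intro: conclusion)
  show "homotopy_conclusion M d h Klf True" "homotopy_conclusion M d h Klfl1 True"
    if "face_compatible M d h \<and> lip_bounded M d h \<and> preserves_local_finiteness M d h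
        \<and> preserves_smoothness M d h"
    using that by (auto intro: conclusion)
qed

end
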